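(* Let $\mathscr{H}$ be a complex Hilbert space and let $A,B\in\mathbb{B}(\mathscr{H})$ satisfy $|A|B=B^*|A|$. Then $$w(AB)\leq\frac{1}{\sqrt{2}}\, r(B)\, w\left(|A|+i|A^*|\right).$$
   Context: For $T\in\mathbb{B}(\mathscr{H})$, $|T|=(T^*T)^{1/2}$, $w(T)=\sup\{|\langle Tx,x\rangle|: \|x\|=1\}$ is the numerical radius and $r(T)$ is the spectral radius. *)

theory Defs
  imports "HOL-Analysis.Analysis"
begin

class complex_hilbert_space = banach +
  fixes scaleC :: "complex \<Rightarrow> 'a \<Rightarrow> 'a"
    and cinner :: "'a \<Rightarrow> 'a \<Rightarrow> complex"
  assumes scaleR_scaleC: "scaleR r x = scaleC (complex_of_real r) x"
    and scaleC_add_right: "scaleC a (x + y) = scaleC a x + scaleC a y"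
    and scaleC_add_left: "scaleC (a + b) x = scaleC a x + scaleC b x"
    and scaleC_scaleC: "scaleC a (scaleC b x) = scaleC (a * b) x"
    and scaleC_one: "scaleC 1 x = x"
    and cinner_add_left: "cinner (x + y) z = cinner x z + cinner y z"
    and cinner_scaleC_left: "cinner (scaleC a x) y = a * cinner x y"
    and cinner_commute: "cinner x y = cnj (cinner y x)"
    and norm_eq_sqrt_cinner: "norm x = sqrt (Re (cinner x x))"

definition bounded_clinear :: "('a::complex_hilbert_space \<Rightarrow> 'a) \<Rightarrow> bool" where
  "bounded_clinear T \<longleftrightarrow> bounded_linear T \<and> (\<forall>c x. T (scaleC c x) = scaleC c (T x))"

definition adj :: "('a::complex_hilbert_space \<Rightarrow> 'a) \<Rightarrow> ('a \<Rightarrow> 'a)" where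
  "adj T = (SOME S. \<forall>x y. cinner (T x) y = cinner x (S y))"

definition pos_op :: "('a::complex_hilbert_space \<Rightarrow> 'a) \<Rightarrow> bool" where
  "pos_op T \<longleftrightarrow> bounded_clinear T \<and> (\<forall>x. cinner (T x) x \<in> \<real> \<and> 0 \<le> Re (cinner (T x) x))"

definition sqrt_op :: "('a::complex_hilbert_space \<Rightarrow> 'a) \<Rightarrow> ('a \<Rightarrow> 'a)" where
  "sqrt_op P = (THE R. pos_op R \<and> R \<circ> R = P)"

definition abs_op :: "('a::complex_hilbert_space \<Rightarrow> 'a) \<Rightarrow> ('a \<Rightarrow> 'a)" where
  "abs_op T = sqrt_op (adj T \<circ> T)"

text \<open>Numerical radius (with the convention that it is 0 on the zero space).\<close>
definition numrad :: "('a::complex_hilbert_space \<Rightarrow> 'a) \<Rightarrow> real" where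
  "numrad T = Sup (insert 0 {cmod (cinner (T x) x) | x. norm x = 1})"

definition spectrum_op :: "('a::complex_hilbert_space \<Rightarrow> 'a) \<Rightarrow> complex set" where
  "spectrum_op T = {z. \<not> (\<exists>S. bounded_clinear S \<and>
      S \<circ> (\<lambda>x. T x - scaleC z x) = id \<and> (\<lambda>x. T x - scaleC z x) \<circ> S = id)}"

definition specrad :: "('a::complex_hilbert_space \<Rightarrow> 'a) \<Rightarrow> real" where
  "specrad T = Sup (insert 0 (cmod ` spectrum_op T))"

end

theory Submission
  imports Defs
begin

text \<open>Write P = |A| and Q = |A*|. The hypothesis PB = B*P says that B is symmetric for the
  semi-inner product \<langle>Px, y\<rangle>. Iterating the Cauchy--Schwarz inequality shows that B is bounded
  for the associated seminorm, and the supremum s of the real numbers \<langle>PBx, x\<rangle> with \<langle>Px, x\<rangle> = 1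
  lies in the spectrum of B: otherwise s - B has a bounded inverse, which is bounded for the
  seminorm as well and forces a gap below s. Applied to B and -B this gives
  |\<langle>PBx, y\<rangle>| \<le> r(B) \<langle>Px, x\<rangle>^(1/2) \<langle>Py, y\<rangle>^(1/2).
  Since AP = QA and AA* = Q^2, taking y = A*z yields
  |\<langle>ABx, Qz\<rangle>| \<le> r(B) \<langle>Px, x\<rangle>^(1/2) \<langle>Q(Qz), Qz\<rangle>^(1/2); this extends to the closure of the
  range of Q, whose orthogonal complement ker Q = ker A* contributes nothing. Hence
  |\<langle>ABx, x\<rangle>| \<le> r(B) (\<langle>Px, x\<rangle> \<langle>Qx, x\<rangle>)^(1/2) \<le> r(B) |\<langle>(P + iQ)x, x\<rangle>| / \<surd>2.
  The square roots are constructed as binomial series \<surd>a \<Sum> c_k (I - A*A/a)^k, which also makes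
  AP = QA evident.\<close>

section \<open>Complex inner product spaces\<close>

lemma scaleC_zero_left [simp]: "scaleC 0 x = 0"
proof -
  have "scaleC 0 x = scaleC (0 + 0) x" by simp
  also have "\<dots> = scaleC 0 x + scaleC 0 x" by (rule scaleC_add_left)
  finally show ?thesis by simp
qed

lemma scaleC_zero_right [simp]: "scaleC a 0 = 0"
proof -
  have "scaleC a 0 = scaleC a (0 + 0)" by simp
  also have "\<dots> = scaleC a 0 + scaleC a 0" by (rule scaleC_add_right)
  finally show ?thesis by simp
qed

lemma scaleC_minus_left: "scaleC (- a) x = - scaleC a x"
  using scaleC_add_left[of "- a" a x, symmetric] by (simp add: eq_neg_iff_add_eq_0)

lemma scaleC_minus_right: "scaleC a (- x) = - scaleC a x"
  using scaleC_add_right[of a "- x" x, symmetric] by (simp add: eq_neg_iff_add_eq_0)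

lemma scaleC_diff_right: "scaleC a (x - y) = scaleC a x - scaleC a y"
  using scaleC_add_right[of a x "- y"] by (simp add: scaleC_minus_right)

lemma cinner_zero_left [simp]: "cinner 0 y = 0"
  using cinner_add_left[of 0 0 y] by simp

lemma cinner_zero_right [simp]: "cinner x 0 = 0"
  using cinner_commute[of x 0] by simp

lemma cinner_add_right: "cinner x (y + z) = cinner x y + cinner x z"
  by (metis cinner_add_left cinner_commute complex_cnj_add)

lemma cinner_scaleC_right: "cinner x (scaleC a y) = cnj a * cinner x y"
  by (metis cinner_commute cinner_scaleC_left complex_cnj_mult)

lemma cinner_scaleR_left: "cinner (scaleR r x) y = complex_of_real r * cinner x y"
  by (simp add: scaleR_scaleC cinner_scaleC_left)

lemma cinner_scaleR_right: "cinner x (scaleR r y) = complex_of_real r * cinner x y"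
  by (simp add: scaleR_scaleC cinner_scaleC_right)

lemma cinner_minus_left: "cinner (- x) y = - cinner x y"
  using cinner_scaleR_left[of "-1" x y] by simp

lemma cinner_minus_right: "cinner x (- y) = - cinner x y"
  using cinner_scaleR_right[of x "-1" y] by simp

lemma cinner_diff_left: "cinner (x - y) z = cinner x z - cinner y z"
  using cinner_add_left[of x "- y" z] by (simp add: cinner_minus_left)

lemma cinner_diff_right: "cinner x (y - z) = cinner x y - cinner x z"
  using cinner_add_right[of x y "- z"] by (simp add: cinner_minus_right)

lemma cinner_self_Im: "Im (cinner x x) = 0"
  by (metis cinner_commute cnj.sel(2) neg_equal_zero)

lemma cinner_self_Re: "Re (cinner x x) = norm x ^ 2"
proof -
  have "0 \<le> Re (cinner x x)"
    using norm_eq_sqrt_cinner[of x] norm_ge_zero[of x] by (metis not_le real_sqrt_lt_0_iff)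
  then show ?thesis using norm_eq_sqrt_cinner[of x] by simp
qed

lemma cinner_self: "cinner x x = complex_of_real (norm x ^ 2)"
  using cinner_self_Re[of x] cinner_self_Im[of x] by (simp add: complex_eq_iff)

lemma cinner_self_eq_0 [simp]: "cinner x x = 0 \<longleftrightarrow> x = 0"
  by (simp add: cinner_self)

lemma cinner_ext_right: "(\<And>z. cinner z x = cinner z y) \<Longrightarrow> x = y"
  by (metis cinner_diff_right cinner_self_eq_0 eq_iff_diff_eq_0)

lemma cnj_mult_self: "cnj c * c = complex_of_real (cmod c ^ 2)"
  using complex_norm_square[of c] by (simp add: mult.commute)

lemma norm_scaleC: "norm (scaleC a x) = cmod a * norm x"
proof -
  have "cinner (scaleC a x) (scaleC a x) = (a * cnj a) * cinner x x"
    by (simp add: cinner_scaleC_left cinner_scaleC_right)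
  then have "norm (scaleC a x) ^ 2 = (cmod a * norm x) ^ 2"
    by (simp add: cinner_self power_mult_distrib flip: complex_norm_square of_real_mult
        of_real_power)
  then show ?thesis by simp
qed

lemma norm_add_sq: "norm (x + y) ^ 2 = norm x ^ 2 + norm y ^ 2 + 2 * Re (cinner x y)"
proof -
  have "Re (cinner y x) = Re (cinner x y)" by (metis cinner_commute cnj.sel(1))
  then show ?thesis by (simp add: cinner_add_left cinner_add_right flip: cinner_self_Re)
qed

lemma parallelogram: "norm (x + y) ^ 2 + norm (x - y) ^ 2 = 2 * norm x ^ 2 + 2 * norm y ^ 2"
  for x y :: "'a::complex_hilbert_space"
  using norm_add_sq[of x y] norm_add_sq[of x "- y"] by (simp add: cinner_minus_right)

lemma bounded_linear_scaleC: "bounded_linear (scaleC a :: 'a::complex_hilbert_space \<Rightarrow> 'a)"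
  by (rule bounded_linear_intro[where K="cmod a"])
     (simp_all add: scaleC_add_right scaleR_scaleC scaleC_scaleC mult.commute norm_scaleC)


section \<open>Linear operators and the Cauchy--Schwarz inequality\<close>

definition clinear :: "('a::complex_hilbert_space \<Rightarrow> 'a) \<Rightarrow> bool" where
  "clinear T \<longleftrightarrow> (\<forall>x y. T (x + y) = T x + T y) \<and> (\<forall>c x. T (scaleC c x) = scaleC c (T x))"

definition selfadj :: "('a::complex_hilbert_space \<Rightarrow> 'a) \<Rightarrow> bool" where
  "selfadj T \<longleftrightarrow> (\<forall>x y. cinner (T x) y = cinner x (T y))"

definition qform :: "('a::complex_hilbert_space \<Rightarrow> 'a) \<Rightarrow> 'a \<Rightarrow> real" where
  "qform P x = Re (cinner (P x) x)"

lemma clinear_add: "clinear T \<Longrightarrow> T (x + y) = T x + T y"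
  by (simp add: clinear_def)

lemma clinear_scaleC: "clinear T \<Longrightarrow> T (scaleC c x) = scaleC c (T x)"
  by (simp add: clinear_def)

lemma clinear_zero: "clinear T \<Longrightarrow> T 0 = 0"
  using clinear_add[of T 0 0] by simp

lemma clinear_minus: "clinear T \<Longrightarrow> T (- x) = - T x"
  using clinear_add[of T x "- x"] clinear_zero[of T] by (simp add: eq_neg_iff_add_eq_0 add.commute)

lemma clinear_diff: "clinear T \<Longrightarrow> T (x - y) = T x - T y"
  using clinear_add[of T x "- y"] clinear_minus[of T y] by simp

lemma clinear_scaleR: "clinear T \<Longrightarrow> T (scaleR r x) = scaleR r (T x)"
  by (simp add: scaleR_scaleC clinear_scaleC)

lemma clinear_sum: "clinear T \<Longrightarrow> T (sum f A) = (\<Sum>i\<in>A. T (f i))"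
  by (induction A rule: infinite_finite_induct) (auto simp: clinear_zero clinear_add)

lemma clinear_id: "clinear (\<lambda>x. x)"
  by (simp add: clinear_def)

lemma clinear_compose: "clinear S \<Longrightarrow> clinear T \<Longrightarrow> clinear (\<lambda>x. S (T x))"
  by (simp add: clinear_def)

lemma bounded_clinear_clinear: "bounded_clinear T \<Longrightarrow> clinear T"
  unfolding bounded_clinear_def clinear_def using linear_add bounded_linear.linear by blast

lemma bounded_clinear_bounded_linear: "bounded_clinear T \<Longrightarrow> bounded_linear T"
  by (simp add: bounded_clinear_def)

lemma bounded_clinearI: "clinear T \<Longrightarrow> (\<And>x. norm (T x) \<le> K * norm x) \<Longrightarrow> bounded_clinear T"
  unfolding bounded_clinear_def
  by (auto simp: clinear_scaleC mult.commute
      intro!: bounded_linear_intro[where K=K] clinear_add clinear_scaleR)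

lemma bounded_clinear_onorm: "bounded_clinear T \<Longrightarrow> norm (T x) \<le> onorm T * norm x"
  by (simp add: bounded_clinear_def onorm)

lemma bounded_clinear_onorm_nonneg: "bounded_clinear T \<Longrightarrow> 0 \<le> onorm T"
  by (simp add: bounded_clinear_def onorm_pos_le)

lemma bounded_clinear_id: "bounded_clinear (\<lambda>x. x)"
  by (rule bounded_clinearI[where K=1]) (simp_all add: clinear_id)

lemma bounded_clinear_compose:
  "bounded_clinear S \<Longrightarrow> bounded_clinear T \<Longrightarrow> bounded_clinear (\<lambda>x. S (T x))"
  unfolding bounded_clinear_def using bounded_linear_compose[of S T] by simp

lemma bounded_clinear_add:
  "bounded_clinear S \<Longrightarrow> bounded_clinear T \<Longrightarrow> bounded_clinear (\<lambda>x. S x + T x)"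
  unfolding bounded_clinear_def using bounded_linear_add[of S T] by (simp add: scaleC_add_right)

lemma bounded_clinear_diff:
  "bounded_clinear S \<Longrightarrow> bounded_clinear T \<Longrightarrow> bounded_clinear (\<lambda>x. S x - T x)"
  unfolding bounded_clinear_def using bounded_linear_sub[of S T] by (simp add: scaleC_diff_right)

lemma bounded_clinear_scaleC: "bounded_clinear T \<Longrightarrow> bounded_clinear (\<lambda>x. scaleC c (T x))"
  unfolding bounded_clinear_def
  using bounded_linear_compose[OF bounded_linear_scaleC, of T c]
  by (simp add: scaleC_scaleC mult.commute)

lemma bounded_clinear_scaleR: "bounded_clinear T \<Longrightarrow> bounded_clinear (\<lambda>x. scaleR r (T x))"
  using bounded_clinear_scaleC[of T "complex_of_real r"] by (simp add: scaleR_scaleC)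

lemma bounded_clinear_minus: "bounded_clinear T \<Longrightarrow> bounded_clinear (\<lambda>x. - T x)"
  using bounded_clinear_scaleR[of T "-1"] by simp

lemma qform_add: "clinear P \<Longrightarrow> cinner (P (a + b)) (a + b) =
    cinner (P a) a + cinner (P a) b + cinner (P b) a + cinner (P b) b"
  by (simp add: clinear_add cinner_add_left cinner_add_right)

lemma qform_diff: "clinear P \<Longrightarrow> cinner (P (a - b)) (a - b) =
    cinner (P a) a - cinner (P a) b - cinner (P b) a + cinner (P b) b"
  by (simp add: clinear_diff cinner_diff_left cinner_diff_right)

lemma qform_scaleC: "clinear P \<Longrightarrow> qform P (scaleC c a) = cmod c ^ 2 * qform P a"
  by (simp add: qform_def clinear_scaleC cinner_scaleC_left cinner_scaleC_right
      mult.assoc[symmetric] cnj_mult_self)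

lemma qform_scaleR: "clinear P \<Longrightarrow> qform P (scaleR r x) = r ^ 2 * qform P x"
  using qform_scaleC[of P "complex_of_real r" x] by (simp add: scaleR_scaleC)

lemma selfadj_cinner_swap: "selfadj S \<Longrightarrow> cinner (S b) a = cnj (cinner (S a) b)"
  unfolding selfadj_def by (metis cinner_commute)

lemma selfadj_cinner_real: "selfadj S \<Longrightarrow> cinner (S a) a = complex_of_real (qform S a)"
  using selfadj_cinner_swap[of S a a] unfolding qform_def
  by (metis Reals_cnj_iff of_real_Re)

lemma le_amgm_of_le_inf:
  fixes X a b c :: real
  assumes "0 \<le> a" "0 \<le> b" "0 \<le> c" and le: "\<And>s. s > 0 \<Longrightarrow> X \<le> c * (s * a + b / s)"
  shows "X \<le> 2 * c * sqrt (a * b)"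
proof (cases "a > 0 \<and> b > 0")
  case True
  define s where "s = sqrt (b / a)"
  have "s > 0" "s * a = sqrt (a * b)" "b / s = sqrt (a * b)"
    using True by (simp_all add: s_def real_sqrt_divide field_simps real_sqrt_mult)
  then show ?thesis using le[of s] by simp
next
  case False
  then have "a * b = 0" using assms by auto
  have linear_bound: "X \<le> c * t" if "t > 0" for t
  proof -
    consider "a = 0" "b = 0" | "a = 0" "b > 0" | "a > 0" "b = 0"
      using \<open>a * b = 0\<close> assms(1,2) by (metis linorder_neqE_linordered_idom mult_eq_0_iff not_le)
    then show ?thesis
    proof cases
      case 1
      then have "X \<le> 0" using le[of 1] by simp
      then show ?thesis using assms that by (meson mult_nonneg_nonneg less_imp_le order_trans)
    next
      case 2
      then show ?thesis using le[of "b / t"] that by simp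
    next
      case 3
      then show ?thesis using le[of "t / a"] that by simp
    qed
  qed
  have "X \<le> 0"
  proof (rule field_le_epsilon)
    fix e :: real assume "0 < e"
    then have "X \<le> c * (e / (c + 1))" using assms by (intro linear_bound) auto
    also have "\<dots> \<le> e" using \<open>0 < e\<close> assms by (simp add: field_simps)
    finally show "X \<le> 0 + e" by simp
  qed
  then show ?thesis by (simp add: \<open>a * b = 0\<close>)
qed

lemma rotate_to_real: "\<exists>\<theta>. cmod \<theta> = 1 \<and> \<theta> * z = complex_of_real (cmod z)"
proof (cases "z = 0")
  case True then show ?thesis by (intro exI[of _ 1]) simp
next
  case False
  show ?thesis
    by (intro exI[of _ "cnj z / complex_of_real (cmod z)"])
       (use False in \<open>simp add: norm_divide cnj_mult_self power2_eq_square\<close>)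
qed

text \<open>Polarize \<langle>Su, v\<rangle> with the rescaled vectors \<theta>\<surd>s u and v/\<surd>s, where |\<theta>| = 1 makes it
  real, and optimize over s.\<close>

lemma hermitian_form_bound:
  assumes S: "clinear S" "selfadj S" and P: "clinear P"
    and P_nonneg: "\<And>u. 0 \<le> qform P u" and r: "0 \<le> r"
    and dominated: "\<And>u. \<bar>qform S u\<bar> \<le> r * qform P u"
  shows "cmod (cinner (S u) v) \<le> r * sqrt (qform P u * qform P v)"
proof -
  obtain \<theta> where \<theta>: "cmod \<theta> = 1" "\<theta> * cinner (S u) v = complex_of_real (cmod (cinner (S u) v))"
    using rotate_to_real by blast
  have "cmod (cinner (S u) v) \<le> (r / 2) * (s * qform P u + qform P v / s)" if s: "s > 0" for s
  proof -
    define a where "a = scaleC (\<theta> * complex_of_real (sqrt s)) u"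
    define b where "b = scaleC (complex_of_real (1 / sqrt s)) v"
    have "cinner (S a) b = \<theta> * cinner (S u) v"
      using s
        by (simp add: a_def b_def clinear_scaleC[OF S(1)] cinner_scaleC_left cinner_scaleC_right)
    then have "4 * cmod (cinner (S u) v) = qform S (a + b) - qform S (a - b)"
      using selfadj_cinner_swap[OF S(2), of b a] \<theta>
      by (simp add: qform_def qform_add[OF S(1)] qform_diff[OF S(1)])
    also have "\<dots> \<le> r * qform P (a + b) + r * qform P (a - b)"
      using dominated[of "a + b"] dominated[of "a - b"] by (simp add: abs_le_iff)
    also have "\<dots> = 2 * r * (qform P a + qform P b)"
      by (simp add: qform_def qform_add[OF P] qform_diff[OF P] algebra_simps)
    also have "qform P a = s * qform P u"
      using s \<theta> by (simp add: a_def qform_scaleC[OF P] norm_mult)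
    also have "qform P b = qform P v / s"
      using s by (simp add: b_def qform_scaleC[OF P] norm_divide power_divide)
    finally show ?thesis by simp
  qed
  then have "cmod (cinner (S u) v) \<le> 2 * (r / 2) * sqrt (qform P u * qform P v)"
    by (intro le_amgm_of_le_inf) (use r P_nonneg in auto)
  then show ?thesis by simp
qed

lemma qform_id: "qform (\<lambda>x. x) x = norm x ^ 2"
  by (simp add: qform_def cinner_self_Re)

lemma cauchy_schwarz: "cmod (cinner x y) \<le> norm x * norm y"
  using hermitian_form_bound[of "\<lambda>x. x" "\<lambda>x. x" 1 x y]
  by (simp add: clinear_id selfadj_def qform_id real_sqrt_mult)

lemma Re_cinner_le: "Re (cinner x y) \<le> norm x * norm y"
  using cauchy_schwarz[of x y] complex_Re_le_cmod order_trans by blast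

lemma bounded_bilinear_cinner:
  "bounded_bilinear (cinner :: 'a::complex_hilbert_space \<Rightarrow> 'a \<Rightarrow> complex)"
proof
  fix a a' b b' :: 'a and r :: real
  show "cinner (a + a') b = cinner a b + cinner a' b" by (rule cinner_add_left)
  show "cinner a (b + b') = cinner a b + cinner a b'" by (rule cinner_add_right)
  show "cinner (scaleR r a) b = scaleR r (cinner a b)"
    by (simp add: cinner_scaleR_left scaleR_conv_of_real)
  show "cinner a (scaleR r b) = scaleR r (cinner a b)"
    by (simp add: cinner_scaleR_right scaleR_conv_of_real)
  show "\<exists>K. \<forall>a b. norm (cinner a b) \<le> norm a * norm b * K"
    by (intro exI[of _ 1]) (simp add: cauchy_schwarz)
qed

lemmas tendsto_cinner = bounded_bilinear.tendsto[OF bounded_bilinear_cinner]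

lemma selfadj_norm_bound:
  assumes "clinear T" "selfadj T" "0 \<le> m" and le: "\<And>x. \<bar>qform T x\<bar> \<le> m * norm x ^ 2"
  shows "norm (T x) \<le> m * norm x"
proof -
  have "norm (T x) ^ 2 \<le> m * (norm x * norm (T x))"
    using hermitian_form_bound[of T "\<lambda>x. x" m x "T x"] assms
    by (simp add: qform_id clinear_id real_sqrt_mult cinner_self norm_power)
  then show ?thesis
    by (cases "T x = 0") (use assms in \<open>auto simp: power2_eq_square mult_le_cancel_right
        algebra_simps\<close>)
qed

lemma selfadj_of_real_form:
  assumes T: "clinear T" and real: "\<And>x. Im (cinner (T x) x) = 0"
  shows "selfadj T"
  unfolding selfadj_def
proof (intro allI)
  fix x y
  define \<alpha> where "\<alpha> = cinner (T x) y"
  define \<beta> where "\<beta> = cinner (T y) x"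
  have "Im \<alpha> + Im \<beta> = 0"
    using real[of "x + y"] real[of x] real[of y] by (simp add: qform_add[OF T] \<alpha>_def \<beta>_def)
  moreover have "Re \<beta> - Re \<alpha> = 0"
    using real[of "x + scaleC \<i> y"] real[of x] real[of y]
    by (simp add: qform_add[OF T] \<alpha>_def \<beta>_def clinear_scaleC[OF T] cinner_scaleC_left
        cinner_scaleC_right)
  ultimately have "cnj \<beta> = \<alpha>" by (simp add: complex_eq_iff)
  then show "cinner (T x) y = cinner x (T y)" by (simp add: \<alpha>_def \<beta>_def cinner_commute[of x])
qed

lemma pos_op_clinear: "pos_op P \<Longrightarrow> clinear P"
  unfolding pos_op_def by (simp add: bounded_clinear_clinear)

lemma pos_op_bounded_clinear: "pos_op P \<Longrightarrow> bounded_clinear P"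
  unfolding pos_op_def by simp

lemma pos_op_selfadj: "pos_op P \<Longrightarrow> selfadj P"
  unfolding pos_op_def
    by (rule selfadj_of_real_form) (auto simp: bounded_clinear_clinear complex_is_Real_iff)

lemma qform_nonneg: "pos_op P \<Longrightarrow> 0 \<le> qform P u"
  unfolding pos_op_def qform_def by simp

lemma pos_op_cauchy_schwarz:
  "pos_op P \<Longrightarrow> cmod (cinner (P u) v) \<le> sqrt (qform P u * qform P v)"
  using hermitian_form_bound[of P P 1 u v]
  by (simp add: pos_op_clinear pos_op_selfadj qform_nonneg)

lemma pos_op_qform_eq_0: "pos_op P \<Longrightarrow> qform P u = 0 \<Longrightarrow> P u = 0"
  using pos_op_cauchy_schwarz[of P u "P u"] by (simp add: cinner_self)

lemma qform_le_onorm: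
  assumes "pos_op P"
  shows "qform P y \<le> onorm P * norm y ^ 2"
proof -
  have "qform P y \<le> norm (P y) * norm y" unfolding qform_def by (rule Re_cinner_le)
  also have "\<dots> \<le> (onorm P * norm y) * norm y"
    by (intro mult_right_mono bounded_clinear_onorm pos_op_bounded_clinear assms) simp
  finally show ?thesis by (simp add: power2_eq_square mult.assoc)
qed


section \<open>Orthogonal decomposition, Riesz representation and adjoints\<close>

lemma midpoint_min_norm_Cauchy:
  fixes K :: "'a::complex_hilbert_space set"
  assumes mid: "\<And>x y. x \<in> K \<Longrightarrow> y \<in> K \<Longrightarrow> scaleR (1/2) (x + y) \<in> K"
    and lower: "\<And>x. x \<in> K \<Longrightarrow> d \<le> norm x" and "0 \<le> d"
    and xs: "\<And>n. xs n \<in> K" "\<And>n. norm (xs n) ^ 2 \<le> d ^ 2 + 1 / (real n + 1)"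
  shows "Cauchy xs"
proof (rule CauchyI)
  have dist_bound: "norm (xs m - xs n) ^ 2 \<le> 2 / (real m + 1) + 2 / (real n + 1)" for m n
  proof -
    have "d \<le> norm (xs m + xs n) / 2"
      using lower[OF mid[OF xs(1) xs(1)], of m n] by simp
    then have "4 * d ^ 2 \<le> norm (xs m + xs n) ^ 2"
      using \<open>0 \<le> d\<close> power_mono[of d "norm (xs m + xs n) / 2" 2] by (simp add: power_divide)
    then show ?thesis using parallelogram[of "xs m" "xs n"] xs(2)[of m] xs(2)[of n] by simp
  qed
  fix e :: real assume e: "e > 0"
  obtain N :: nat where N: "4 / e ^ 2 < real N" using reals_Archimedean2 by blast
  have "norm (xs m - xs n) < e" if "m \<ge> N" "n \<ge> N" for m n
  proof -
    have "0 < 4 / e ^ 2" using e by simp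
    then have Np: "real N > 0" using N by linarith
    have "2 / (real m + 1) \<le> 2 / real N" "2 / (real n + 1) \<le> 2 / real N"
      using that Np by (simp_all add: frac_le)
    then have "norm (xs m - xs n) ^ 2 \<le> 4 / real N" using dist_bound[of m n] by simp
    also have "\<dots> < e ^ 2" using N Np e by (simp add: field_simps)
    finally show ?thesis using e by (simp add: power_less_imp_less_base)
  qed
  then show "\<exists>M. \<forall>m\<ge>M. \<forall>n\<ge>M. norm (xs m - xs n) < e" by blast
qed

lemma min_norm_exists:
  fixes K :: "'a::complex_hilbert_space set"
  assumes "K \<noteq> {}" and "closed K"
    and mid: "\<And>x y. x \<in> K \<Longrightarrow> y \<in> K \<Longrightarrow> scaleR (1/2) (x + y) \<in> K"
  shows "\<exists>x0\<in>K. \<forall>x\<in>K. norm x0 \<le> norm x"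
proof -
  define d where "d = Inf (norm ` K)"
  have "bdd_below (norm ` K)" by (rule bdd_belowI[of _ 0]) auto
  then have lower: "d \<le> norm x" if "x \<in> K" for x
    unfolding d_def using that by (simp add: cInf_lower)
  have "0 \<le> d" unfolding d_def using \<open>K \<noteq> {}\<close> by (auto intro!: cInf_greatest)
  have "\<exists>x\<in>K. norm x ^ 2 \<le> d ^ 2 + 1 / (real n + 1)" for n
  proof -
    have "d < sqrt (d ^ 2 + 1 / (real n + 1))"
      using \<open>0 \<le> d\<close> real_sqrt_less_mono[of "d ^ 2" "d ^ 2 + 1 / (real n + 1)"] by simp
    then have "\<exists>y\<in>norm ` K. y < sqrt (d ^ 2 + 1 / (real n + 1))"
      unfolding d_def by (intro cInf_lessD) (use \<open>K \<noteq> {}\<close> in auto)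
    then obtain x where "x \<in> K" "norm x < sqrt (d ^ 2 + 1 / (real n + 1))" by auto
    then have "norm x ^ 2 < sqrt (d ^ 2 + 1 / (real n + 1)) ^ 2"
      by (intro power_strict_mono) auto
    then show ?thesis using \<open>x \<in> K\<close> by (intro bexI[of _ x]) auto
  qed
  then have "\<forall>n. \<exists>x. x \<in> K \<and> norm x ^ 2 \<le> d ^ 2 + 1 / (real n + 1)" by blast
  then obtain xs where xs: "\<And>n. xs n \<in> K" "\<And>n. norm (xs n) ^ 2 \<le> d ^ 2 + 1 / (real n + 1)"
    by metis
  obtain x0 where x0: "xs \<longlonglongrightarrow> x0"
    using midpoint_min_norm_Cauchy[OF mid lower \<open>0 \<le> d\<close> xs] Cauchy_convergent_iff convergent_def
    by blast
  have "norm x0 ^ 2 \<le> d ^ 2 + 0"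
  proof (rule LIMSEQ_le[OF _ _ exI[of _ 0]])
    show "(\<lambda>n. norm (xs n) ^ 2) \<longlonglongrightarrow> norm x0 ^ 2" by (intro tendsto_intros x0)
    show "(\<lambda>n. d ^ 2 + 1 / (real n + 1)) \<longlonglongrightarrow> d ^ 2 + 0"
      using LIMSEQ_inverse_real_of_nat
      by (intro tendsto_intros) (simp add: inverse_eq_divide add.commute)
  qed (use xs(2) in auto)
  then have "norm x0 \<le> d" using \<open>0 \<le> d\<close> power2_le_imp_le[of "norm x0" d] by simp
  moreover have "x0 \<in> K" by (rule closed_sequentially[OF \<open>closed K\<close> xs(1) x0])
  ultimately show ?thesis using lower by (meson order_trans)
qed

lemma eq_0_of_linear_le_quadratic:
  fixes w k :: real
  assumes "0 \<le> w" "0 \<le> k" and le: "\<And>s. s > 0 \<Longrightarrow> 2 * s * w \<le> s ^ 2 * w * k"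
  shows "w = 0"
proof -
  define s where "s = 1 / (k + 1)"
  have s: "s > 0" "s * k < 1" using assms by (simp_all add: s_def)
  have "2 * s * w \<le> s * w * (s * k)" using le[OF s(1)] by (simp add: power2_eq_square algebra_simps)
  also have "\<dots> \<le> s * w * 1" using s assms by (intro mult_left_mono) auto
  finally show ?thesis using s assms by (simp add: mult_le_0_iff)
qed

lemma min_norm_orthogonal:
  assumes min: "\<And>t. norm x0 \<le> norm (x0 + scaleC t k)"
  shows "cinner x0 k = 0"
proof -
  define w where "w = cmod (cinner x0 k) ^ 2"
  have "2 * s * w \<le> s ^ 2 * w * norm k ^ 2" if s: "s > 0" for s
  proof -
    define t where "t = - (complex_of_real s * cinner x0 k)"
    have "norm x0 ^ 2 \<le> norm (x0 + scaleC t k) ^ 2" using min[of t] by (simp add: power_mono)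
    also have "\<dots> = norm x0 ^ 2 + norm (scaleC t k) ^ 2 + 2 * Re (cinner x0 (scaleC t k))"
      by (rule norm_add_sq)
    also have "cinner x0 (scaleC t k) = - complex_of_real (s * w)"
      by (simp add: t_def w_def cinner_scaleC_right mult.commute flip: complex_norm_square)
    also have "norm (scaleC t k) ^ 2 = s ^ 2 * w * norm k ^ 2"
      using s by (simp add: norm_scaleC t_def w_def power_mult_distrib norm_mult)
    finally show ?thesis by simp
  qed
  then have "w = 0" by (intro eq_0_of_linear_le_quadratic[of w "norm k ^ 2"]) (auto simp: w_def)
  then show ?thesis by (simp add: w_def)
qed

definition csubspace :: "'a::complex_hilbert_space set \<Rightarrow> bool" where
  "csubspace M \<longleftrightarrow> 0 \<in> M \<and> (\<forall>x\<in>M. \<forall>y\<in>M. x + y \<in> M) \<and> (\<forall>c. \<forall>x\<in>M. scaleC c x \<in> M)"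

lemma orthogonal_decomposition:
  assumes M: "csubspace M" "closed M"
  shows "\<exists>m\<in>M. \<forall>w\<in>M. cinner (y - m) w = 0"
proof -
  define K where "K = {k. y - k \<in> M}"
  have "closed K"
    unfolding K_def using continuous_closed_vimage[OF M(2), of "\<lambda>k. y - k"]
    by (simp add: vimage_def continuous_on_diff)
  moreover have "y \<in> K" using M(1) by (simp add: K_def csubspace_def)
  moreover have "scaleR (1/2) (k1 + k2) \<in> K" if "k1 \<in> K" "k2 \<in> K" for k1 k2
  proof -
    have "scaleC (complex_of_real (1/2)) ((y - k1) + (y - k2)) \<in> M"
      using that M(1) by (simp add: K_def csubspace_def)
    moreover have "scaleR (1/2) ((y - k1) + (y - k2)) = y - scaleR (1/2) (k1 + k2)"
      by (metis add_diff_add scaleR_half_double scaleR_right_diff_distrib)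
    ultimately show ?thesis by (simp add: K_def scaleR_scaleC)
  qed
  ultimately obtain y0 where y0: "y0 \<in> K" "\<And>k. k \<in> K \<Longrightarrow> norm y0 \<le> norm k"
    using min_norm_exists[of K] by blast
  have "cinner y0 w = 0" if "w \<in> M" for w
  proof (rule min_norm_orthogonal)
    fix t
    have "(y - y0) + scaleC (- t) w \<in> M" using y0(1) that M(1) by (simp add: K_def csubspace_def)
    then have "y0 + scaleC t w \<in> K" by (simp add: K_def scaleC_minus_left algebra_simps)
    then show "norm y0 \<le> norm (y0 + scaleC t w)" by (rule y0(2))
  qed
  then show ?thesis using y0(1) by (intro bexI[of _ "y - y0"]) (auto simp: K_def)
qed

lemma csubspace_range:
  assumes "clinear T"
  shows "csubspace (range T)"
proof -
  have "T a + T b = T (a + b)" "scaleC c (T a) = T (scaleC c a)" "0 = T 0" for a b c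
    using assms by (simp_all add: clinear_add clinear_scaleC clinear_zero)
  then show ?thesis unfolding csubspace_def by blast
qed

lemma csubspace_closure:
  assumes M: "csubspace M"
  shows "csubspace (closure M)"
proof -
  have closure_image: "f ` closure M \<subseteq> closure M"
    if "continuous_on UNIV f" "\<And>x. x \<in> M \<Longrightarrow> f x \<in> closure M" for f
    using image_closure_subset[of M f "closure M"] that continuous_on_subset[of UNIV f "closure M"]
    by blast
  have "(\<lambda>b. a + b) ` closure M \<subseteq> closure M" if "a \<in> M" for a
    using that M closure_subset[of M]
    by (intro closure_image continuous_on_add continuous_on_const continuous_on_id)
       (auto simp: csubspace_def)
  then have "(\<lambda>a. a + b) ` closure M \<subseteq> closure M" if "b \<in> closure M" for b
    using that by (intro closure_image continuous_on_add continuous_on_const continuous_on_id) auto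
  moreover have "scaleC c ` closure M \<subseteq> closure M" for c
    using M closure_subset[of M]
    by (intro closure_image linear_continuous_on bounded_linear_scaleC) (auto simp: csubspace_def)
  ultimately show ?thesis
    using M closure_subset[of M] unfolding csubspace_def image_subset_iff by blast
qed

lemma riesz_representation:
  fixes f :: "'a::complex_hilbert_space \<Rightarrow> complex"
  assumes add: "\<And>x y. f (x + y) = f x + f y" and scale: "\<And>c x. f (scaleC c x) = c * f x"
    and bounded: "\<And>x. cmod (f x) \<le> C * norm x"
  shows "\<exists>v. \<forall>x. f x = cinner x v"
proof (cases "\<forall>x. f x = 0")
  case True then show ?thesis by (intro exI[of _ 0]) simp
next
  case False
  then obtain x1 where x1: "f x1 \<noteq> 0" by blast
  define M where "M = {x. f x = 0}"
  have "bounded_linear f"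
    by (rule bounded_linear_intro[where K=C])
       (auto simp: add scaleR_scaleC scale scaleR_conv_of_real bounded mult.commute)
  then have "closed M"
    unfolding M_def by (intro closed_Collect_eq) (auto intro: linear_continuous_on)
  moreover have "csubspace M"
    unfolding M_def csubspace_def using add scale scale[of 0 0] by auto
  ultimately obtain m where m: "m \<in> M" "\<And>w. w \<in> M \<Longrightarrow> cinner (x1 - m) w = 0"
    using orthogonal_decomposition by blast
  define y0 where "y0 = x1 - m"
  have fy0: "f y0 \<noteq> 0" using x1 m(1) add[of y0 m] by (simp add: M_def y0_def)
  then have "y0 \<noteq> 0" using scale[of 0 0] by auto
  show ?thesis
  proof (intro exI allI)
    fix x
    have "f (x - scaleC (f x / f y0) y0) = 0"
      using fy0 add[of "x - scaleC (f x / f y0) y0" "scaleC (f x / f y0) y0"] scale by simp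
    then have "cinner y0 (x - scaleC (f x / f y0) y0) = 0" using m(2) by (simp add: M_def y0_def)
    then have "cinner (x - scaleC (f x / f y0) y0) y0 = 0"
      by (metis cinner_commute complex_cnj_zero)
    then have "cinner x y0 = f x / f y0 * complex_of_real (norm y0 ^ 2)"
      by (simp add: cinner_diff_left cinner_scaleC_left cinner_self)
    then show "f x = cinner x (scaleC (cnj (f y0) / complex_of_real (norm y0 ^ 2)) y0)"
      using fy0 \<open>y0 \<noteq> 0\<close> by (simp add: cinner_scaleC_right field_simps)
  qed
qed

lemma adjoint_exists:
  assumes T: "bounded_clinear T"
  shows "\<exists>S. \<forall>x y. cinner (T x) y = cinner x (S y)"
proof -
  have "\<exists>v. \<forall>x. cinner (T x) y = cinner x v" for y
  proof (rule riesz_representation)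
    fix x x' and c
    show "cinner (T (x + x')) y = cinner (T x) y + cinner (T x') y"
      using T by (simp add: bounded_clinear_clinear clinear_add cinner_add_left)
    show "cinner (T (scaleC c x)) y = c * cinner (T x) y"
      using T by (simp add: bounded_clinear_clinear clinear_scaleC cinner_scaleC_left)
    have "cmod (cinner (T x) y) \<le> norm (T x) * norm y" by (rule cauchy_schwarz)
    also have "\<dots> \<le> (onorm T * norm x) * norm y"
      by (intro mult_right_mono bounded_clinear_onorm[OF T]) simp
    finally show "cmod (cinner (T x) y) \<le> (onorm T * norm y) * norm x" by (simp add: algebra_simps)
  qed
  then have "\<forall>y. \<exists>v. \<forall>x. cinner (T x) y = cinner x v" by blast
  then show ?thesis by metis
qed

lemma adj_cinner_right: "bounded_clinear T \<Longrightarrow> cinner (T x) y = cinner x (adj T y)"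
  unfolding adj_def using someI_ex[OF adjoint_exists] by blast

lemma adj_cinner_left: "bounded_clinear T \<Longrightarrow> cinner (adj T y) x = cinner y (T x)"
  by (metis adj_cinner_right cinner_commute)

lemma adj_unique:
  assumes T: "bounded_clinear T" and S: "\<And>x y. cinner (T x) y = cinner x (S y)"
  shows "adj T = S"
proof
  fix y show "adj T y = S y"
    by (rule cinner_ext_right) (metis S adj_cinner_right[OF T])
qed

lemma adj_norm:
  assumes T: "bounded_clinear T"
  shows "norm (adj T y) \<le> onorm T * norm y"
proof -
  have "norm (adj T y) ^ 2 = Re (cinner (T (adj T y)) y)"
    by (simp add: adj_cinner_right[OF T] flip: cinner_self_Re)
  also have "\<dots> \<le> norm (T (adj T y)) * norm y" by (rule Re_cinner_le)
  also have "\<dots> \<le> onorm T * norm (adj T y) * norm y"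
    by (intro mult_right_mono bounded_clinear_onorm[OF T]) simp
  finally have "norm (adj T y) * norm (adj T y) \<le> (onorm T * norm y) * norm (adj T y)"
    by (simp add: power2_eq_square algebra_simps)
  then show ?thesis
    by (cases "adj T y = 0") (auto simp: bounded_clinear_onorm_nonneg[OF T] mult_le_cancel_right)
qed

lemma adj_bounded_clinear:
  assumes T: "bounded_clinear T"
  shows "bounded_clinear (adj T)"
proof (rule bounded_clinearI[OF _ adj_norm[OF T]])
  show "clinear (adj T)" unfolding clinear_def
  proof (intro conjI allI)
    fix x y c
    show "adj T (x + y) = adj T x + adj T y"
      by (rule cinner_ext_right) (simp add: adj_cinner_right[OF T, symmetric] cinner_add_right)
    show "adj T (scaleC c x) = scaleC c (adj T x)"
      by (rule cinner_ext_right) (simp add: adj_cinner_right[OF T, symmetric] cinner_scaleC_right)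
  qed
qed

lemma adj_adj: "bounded_clinear T \<Longrightarrow> adj (adj T) = T"
  using adj_cinner_left[of T] by (intro adj_unique adj_bounded_clinear) auto


section \<open>Powers of operators and the spectrum\<close>

lemma bounded_clinear_funpow: "bounded_clinear T \<Longrightarrow> bounded_clinear (T ^^ k)"
proof (induction k)
  case 0 then show ?case using bounded_clinear_id by (simp add: id_def)
next
  case (Suc k) then show ?case by (simp add: bounded_clinear_compose)
qed

lemma norm_funpow_le:
  fixes T :: "'a::real_normed_vector \<Rightarrow> 'a"
  assumes "\<And>x. norm (T x) \<le> M * norm x" "0 \<le> M"
  shows "norm ((T ^^ k) x) \<le> M ^ k * norm x"
proof (induction k)
  case 0 then show ?case by simp
next
  case (Suc k)
  have "norm ((T ^^ Suc k) x) \<le> M * norm ((T ^^ k) x)" using assms(1) by simp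
  also have "\<dots> \<le> M * (M ^ k * norm x)" using Suc assms(2) by (rule mult_left_mono)
  finally show ?case by (simp add: mult.assoc)
qed

lemma funpow_commute:
  fixes T :: "'a \<Rightarrow> 'a" and T' :: "'b \<Rightarrow> 'b"
  assumes "\<And>x. S (T x) = T' (S x)"
  shows "S ((T ^^ k) x) = (T' ^^ k) (S x)"
  by (induction k) (simp_all add: assms)

lemma selfadj_funpow: "selfadj T \<Longrightarrow> selfadj (T ^^ k)"
  by (induction k) (simp_all add: selfadj_def funpow_swap1)

definition neumann :: "('a::complex_hilbert_space \<Rightarrow> 'a) \<Rightarrow> complex \<Rightarrow> 'a \<Rightarrow> 'a" where
  "neumann B z y = (\<Sum>k. scaleC (1 / z ^ k) ((B ^^ k) y))"

locale neumann_series =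
  fixes B :: "'a::complex_hilbert_space \<Rightarrow> 'a" and z :: complex
  assumes B: "bounded_clinear B" and z: "onorm B < cmod z"
begin

definition q where "q = onorm B / cmod z"

lemma q: "0 \<le> q" "q < 1"
  using z bounded_clinear_onorm_nonneg[OF B] by (simp_all add: q_def divide_less_eq)

lemma z_nonzero: "z \<noteq> 0"
  using z bounded_clinear_onorm_nonneg[OF B] by auto

lemma term_bound: "norm (scaleC (1 / z ^ k) ((B ^^ k) y)) \<le> q ^ k * norm y"
proof -
  have "norm ((B ^^ k) y) \<le> onorm B ^ k * norm y"
    by (intro norm_funpow_le bounded_clinear_onorm B bounded_clinear_onorm_nonneg)
  then show ?thesis
    using z_nonzero
      by (simp add: norm_scaleC norm_divide norm_power q_def power_divide divide_right_mono)
qed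

lemma summable_geometric_bound: "summable (\<lambda>k. q ^ k * norm y)"
  using q by (intro summable_mult2 summable_geometric) simp

lemma summable_norm_terms: "summable (\<lambda>k. norm (scaleC (1 / z ^ k) ((B ^^ k) y)))"
  by (rule summable_comparison_test[OF _ summable_geometric_bound]) (auto intro: term_bound)

lemma summable_terms: "summable (\<lambda>k. scaleC (1 / z ^ k) ((B ^^ k) y))"
  by (rule summable_norm_cancel[OF summable_norm_terms])

lemma neumann_clinear: "clinear (neumann B z)"
  unfolding clinear_def neumann_def
proof (intro conjI allI)
  have clinear_powers: "clinear (B ^^ k)" for k
    by (rule bounded_clinear_clinear[OF bounded_clinear_funpow[OF B]])
  fix x y c
  show "(\<Sum>k. scaleC (1 / z ^ k) ((B ^^ k) (x + y))) =
      (\<Sum>k. scaleC (1 / z ^ k) ((B ^^ k) x)) + (\<Sum>k. scaleC (1 / z ^ k) ((B ^^ k) y))"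
    by (simp add: suminf_add[OF summable_terms summable_terms] clinear_add[OF clinear_powers]
        scaleC_add_right)
  show "(\<Sum>k. scaleC (1 / z ^ k) ((B ^^ k) (scaleC c x))) =
      scaleC c (\<Sum>k. scaleC (1 / z ^ k) ((B ^^ k) x))"
    by (simp add: bounded_linear.suminf[OF bounded_linear_scaleC summable_terms]
        clinear_scaleC[OF clinear_powers] scaleC_scaleC mult.commute)
qed

lemma neumann_bounded_clinear: "bounded_clinear (neumann B z)"
proof (rule bounded_clinearI[OF neumann_clinear])
  fix y
  have "norm (neumann B z y) \<le> (\<Sum>k. norm (scaleC (1 / z ^ k) ((B ^^ k) y)))"
    unfolding neumann_def by (rule summable_norm[OF summable_norm_terms])
  also have "\<dots> \<le> (\<Sum>k. q ^ k * norm y)"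
    by (rule suminf_le[OF term_bound summable_norm_terms summable_geometric_bound])
  also have "\<dots> = (\<Sum>k. q ^ k) * norm y"
    using q by (intro suminf_mult2[symmetric] summable_geometric) simp
  finally show "norm (neumann B z y) \<le> (\<Sum>k. q ^ k) * norm y" .
qed

lemma neumann_commute: "neumann B z (B y) = B (neumann B z y)"
  unfolding neumann_def
  using funpow_commute[of B B B] bounded_linear.suminf[OF bounded_clinear_bounded_linear[OF B]
      summable_terms]
  by (simp add: clinear_scaleC[OF bounded_clinear_clinear[OF B]])

lemma neumann_telescope: "neumann B z y - scaleC (1 / z) (B (neumann B z y)) = y"
proof -
  have "scaleC (1 / z) (B (neumann B z y)) =
      (\<Sum>k. scaleC (1 / z) (B (scaleC (1 / z ^ k) ((B ^^ k) y))))"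
    unfolding neumann_def
    using bounded_linear.suminf[OF bounded_clinear_bounded_linear[OF B] summable_terms]
      bounded_linear.suminf[OF bounded_linear_scaleC
        bounded_linear.summable[OF bounded_clinear_bounded_linear[OF B] summable_terms]]
    by simp
  also have "\<dots> = (\<Sum>k. scaleC (1 / z ^ Suc k) ((B ^^ Suc k) y))"
    using z_nonzero by (simp add: clinear_scaleC[OF bounded_clinear_clinear[OF B]] scaleC_scaleC)
  also have "\<dots> = neumann B z y - y"
    using suminf_split_head[OF summable_terms, of y] by (simp add: neumann_def scaleC_one)
  finally show ?thesis by simp
qed

end

lemma spectrum_op_le_onorm:
  assumes B: "bounded_clinear B" and spec: "z \<in> spectrum_op B"
  shows "cmod z \<le> onorm B"
proof (rule ccontr)
  assume "\<not> cmod z \<le> onorm B"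
  then interpret neumann_series B z by unfold_locales (use B in auto)
  define S where "S y = - scaleC (1 / z) (neumann B z y)" for y
  have S: "bounded_clinear S"
    unfolding S_def using bounded_clinear_scaleC[OF neumann_bounded_clinear, of "- 1 / z"]
    by (simp add: scaleC_minus_left)
  have BS: "B (S y) - scaleC z (S y) = y" for y
    using neumann_telescope[of y] z_nonzero
    by (simp add: S_def clinear_minus[OF bounded_clinear_clinear[OF B]] scaleC_minus_right
        clinear_scaleC[OF bounded_clinear_clinear[OF B]] scaleC_scaleC scaleC_one algebra_simps)
  have "S (B y - scaleC z y) = B (S y) - scaleC z (S y)" for y
    using z_nonzero
      by (simp add: S_def clinear_diff[OF neumann_clinear] clinear_scaleC[OF neumann_clinear]
        neumann_commute scaleC_diff_right scaleC_scaleC scaleC_one clinear_minus[OF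
            bounded_clinear_clinear[OF B]]
        clinear_scaleC[OF bounded_clinear_clinear[OF B]] scaleC_minus_right)
  then have "S \<circ> (\<lambda>x. B x - scaleC z x) = id" "(\<lambda>x. B x - scaleC z x) \<circ> S = id"
    using BS by (simp_all add: fun_eq_iff)
  then show False using spec S unfolding spectrum_op_def by blast
qed

lemma spectrum_op_bdd: "bounded_clinear B \<Longrightarrow> bdd_above (insert 0 (cmod ` spectrum_op B))"
  by (rule bdd_aboveI[of _ "onorm B"]) (auto dest: spectrum_op_le_onorm simp:
      bounded_clinear_onorm_nonneg)

lemma specrad_nonneg: "bounded_clinear B \<Longrightarrow> 0 \<le> specrad B"
  unfolding specrad_def by (rule cSup_upper[OF insertI1 spectrum_op_bdd])

lemma norm_le_specrad: "bounded_clinear B \<Longrightarrow> z \<in> spectrum_op B \<Longrightarrow> cmod z \<le> specrad B"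
  unfolding specrad_def by (rule cSup_upper[OF _ spectrum_op_bdd]) auto

lemma spectrum_op_uminus:
  assumes B: "bounded_clinear B" and z: "z \<in> spectrum_op (\<lambda>x. - B x)"
  shows "- z \<in> spectrum_op B"
proof (rule ccontr)
  assume "- z \<notin> spectrum_op B"
  then obtain S where S: "bounded_clinear S"
      "S \<circ> (\<lambda>x. B x - scaleC (- z) x) = id" "(\<lambda>x. B x - scaleC (- z) x) \<circ> S = id"
    unfolding spectrum_op_def by blast
  have "(\<lambda>x. - S x) \<circ> (\<lambda>x. - B x - scaleC z x) = id"
    using S(2) bounded_clinear_clinear[OF S(1)]
    by (simp add: fun_eq_iff scaleC_minus_left clinear_minus[symmetric] algebra_simps)
  moreover have "(\<lambda>x. - B x - scaleC z x) \<circ> (\<lambda>x. - S x) = id"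
    using S(3) bounded_clinear_clinear[OF B]
    by (simp add: fun_eq_iff scaleC_minus_left scaleC_minus_right clinear_minus algebra_simps)
  ultimately show False
    using z bounded_clinear_minus[OF S(1)] unfolding spectrum_op_def by blast
qed


section \<open>Power series of operators\<close>

definition op_series :: "(nat \<Rightarrow> real) \<Rightarrow> ('a::complex_hilbert_space \<Rightarrow> 'a) \<Rightarrow> 'a \<Rightarrow> 'a" where
  "op_series c T x = (\<Sum>k. scaleR (c k) ((T ^^ k) x))"

lemma Cauchy_product_tail_tendsto_0:
  fixes a :: "nat \<Rightarrow> real"
  assumes nonneg: "\<And>k. 0 \<le> a k" and "summable a"
  shows "(\<lambda>N. \<Sum>(i, j)\<in>{..<N} \<times> {..<N} - {(i, j). i + j < N}. a i * a j) \<longlonglongrightarrow> 0"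
proof -
  have sa: "summable (\<lambda>k. norm (a k))" using assms by simp
  have square: "(\<lambda>N. \<Sum>(i, j)\<in>{..<N} \<times> {..<N}. a i * a j) \<longlonglongrightarrow> suminf a * suminf a"
  proof -
    have "(\<lambda>N. (\<Sum>k<N. a k) * (\<Sum>k<N. a k)) \<longlonglongrightarrow> suminf a * suminf a"
      by (intro tendsto_intros summable_LIMSEQ \<open>summable a\<close>)
    then show ?thesis by (simp add: sum_product sum.cartesian_product)
  qed
  have triangle: "(\<lambda>N. \<Sum>(i, j)\<in>{(i, j). i + j < N}. a i * a j) \<longlonglongrightarrow> suminf a * suminf a"
    using Cauchy_product_sums[OF sa sa] by (simp add: sums_def sum.triangle_reindex)
  have "{(i, j). i + j < N} \<subseteq> {..<N} \<times> {..<N}" for N :: nat by auto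
  then show ?thesis
    using tendsto_diff[OF square triangle] by (simp add: sum_diff)
qed

locale op_series_conv =
  fixes c :: "nat \<Rightarrow> real" and T :: "'a::complex_hilbert_space \<Rightarrow> 'a" and M :: real
  assumes T: "bounded_clinear T" and T_le: "\<And>x. norm (T x) \<le> M * norm x" and M: "0 \<le> M"
    and summable_coeff: "summable (\<lambda>k. \<bar>c k\<bar> * M ^ k)"
begin

lemma clinear_powers: "clinear (T ^^ k)"
  by (rule bounded_clinear_clinear[OF bounded_clinear_funpow[OF T]])

lemma norm_power_le: "norm ((T ^^ k) x) \<le> M ^ k * norm x"
  by (rule norm_funpow_le[OF T_le M])

lemma term_bound: "norm (scaleR (c k) ((T ^^ k) x)) \<le> \<bar>c k\<bar> * M ^ k * norm x"
  using norm_power_le[of k x] by (simp add: mult.assoc mult_left_mono)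

lemma summable_norm_terms: "summable (\<lambda>k. norm (scaleR (c k) ((T ^^ k) x)))"
  using term_bound
  by (intro summable_comparison_test'[where N=0, OF summable_mult2[OF summable_coeff, of "norm
      x"]]) simp

lemma summable_terms: "summable (\<lambda>k. scaleR (c k) ((T ^^ k) x))"
  by (rule summable_norm_cancel[OF summable_norm_terms])

lemma op_series_tendsto: "(\<lambda>n. \<Sum>k<n. scaleR (c k) ((T ^^ k) x)) \<longlonglongrightarrow> op_series c T x"
  unfolding op_series_def by (rule summable_LIMSEQ[OF summable_terms])

lemma op_series_norm: "norm (op_series c T x) \<le> (\<Sum>k. \<bar>c k\<bar> * M ^ k) * norm x"
proof -
  have "norm (op_series c T x) \<le> (\<Sum>k. norm (scaleR (c k) ((T ^^ k) x)))"
    unfolding op_series_def by (rule summable_norm[OF summable_norm_terms])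
  also have "\<dots> \<le> (\<Sum>k. \<bar>c k\<bar> * M ^ k * norm x)"
    by (rule suminf_le[OF term_bound summable_norm_terms summable_mult2[OF summable_coeff]])
  also have "\<dots> = (\<Sum>k. \<bar>c k\<bar> * M ^ k) * norm x" by (simp add: suminf_mult2[OF summable_coeff])
  finally show ?thesis .
qed

lemma op_series_clinear: "clinear (op_series c T)"
  unfolding clinear_def
proof (intro conjI allI)
  fix x y a
  have "op_series c T x + op_series c T y =
      (\<Sum>k. scaleR (c k) ((T ^^ k) x) + scaleR (c k) ((T ^^ k) y))"
    unfolding op_series_def by (rule suminf_add[OF summable_terms summable_terms])
  then show "op_series c T (x + y) = op_series c T x + op_series c T y"
    by (simp add: op_series_def clinear_add[OF clinear_powers] scaleR_add_right)
  have "scaleC a (op_series c T x) = (\<Sum>k. scaleC a (scaleR (c k) ((T ^^ k) x)))"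
    unfolding op_series_def by (rule bounded_linear.suminf[OF bounded_linear_scaleC summable_terms])
  then show "op_series c T (scaleC a x) = scaleC a (op_series c T x)"
    by (simp add: op_series_def clinear_scaleC[OF clinear_powers] scaleR_scaleC scaleC_scaleC
        mult.commute)
qed

lemma op_series_bounded_clinear: "bounded_clinear (op_series c T)"
  by (rule bounded_clinearI[OF op_series_clinear op_series_norm])

lemma op_series_commute:
  assumes S: "bounded_clinear S" and comm: "\<And>x. S (T x) = T' (S x)"
  shows "S (op_series c T x) = op_series c T' (S x)"
  unfolding op_series_def
  using bounded_linear.suminf[OF bounded_clinear_bounded_linear[OF S] summable_terms]
  by (simp add: clinear_scaleR[OF bounded_clinear_clinear[OF S]] funpow_commute[of S T T', OF comm])

lemma op_series_cinner_left:
  "cinner (op_series c T x) y = (\<Sum>k. complex_of_real (c k) * cinner ((T ^^ k) x) y)"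
  unfolding op_series_def
  using bounded_linear.suminf[OF bounded_bilinear.bounded_linear_left[OF bounded_bilinear_cinner]
      summable_terms]
  by (simp add: cinner_scaleR_left)

lemma op_series_cinner_right:
  "cinner y (op_series c T x) = (\<Sum>k. complex_of_real (c k) * cinner y ((T ^^ k) x))"
  unfolding op_series_def
  using bounded_linear.suminf[OF bounded_bilinear.bounded_linear_right[OF bounded_bilinear_cinner]
      summable_terms]
  by (simp add: cinner_scaleR_right)

lemma op_series_selfadj: "selfadj T \<Longrightarrow> selfadj (op_series c T)"
  using selfadj_funpow[of T]
  by (simp add: selfadj_def op_series_cinner_left op_series_cinner_right)

lemma op_series_qform: "qform (op_series c T) x = (\<Sum>k. c k * qform (T ^^ k) x)"
  unfolding qform_def op_series_def
  using bounded_linear.suminf[OF bounded_linear_compose[OF bounded_linear_Re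
        bounded_bilinear.bounded_linear_left[OF bounded_bilinear_cinner]] summable_terms]
  by (simp add: cinner_scaleR_left)

definition partial :: "nat \<Rightarrow> 'a \<Rightarrow> 'a" where
  "partial N v = (\<Sum>k<N. scaleR (c k) ((T ^^ k) v))"

lemma partial_norm: "norm (partial N v) \<le> (\<Sum>k. \<bar>c k\<bar> * M ^ k) * norm v"
proof -
  have "norm (partial N v) \<le> (\<Sum>k<N. \<bar>c k\<bar> * M ^ k * norm v)"
    unfolding partial_def by (intro norm_sum[THEN order_trans] sum_mono term_bound)
  also have "\<dots> \<le> (\<Sum>k. \<bar>c k\<bar> * M ^ k) * norm v"
    unfolding sum_distrib_right[symmetric]
    by (intro mult_right_mono sum_le_suminf[OF summable_coeff]) (auto simp: M)
  finally show ?thesis .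
qed

lemma partial_partial_tendsto: "(\<lambda>N. partial N (partial N x)) \<longlonglongrightarrow> op_series c T (op_series c T x)"
proof -
  define C where "C = (\<Sum>k. \<bar>c k\<bar> * M ^ k)"
  have "(\<lambda>N. C * norm (partial N x - op_series c T x)) \<longlonglongrightarrow> C * 0"
    using op_series_tendsto[of x]
    by (intro tendsto_intros) (simp add: partial_def tendsto_norm_zero LIM_zero)
  then have "(\<lambda>N. C * norm (partial N x - op_series c T x)) \<longlonglongrightarrow> 0" by simp
  moreover have "norm (partial N (partial N x) - partial N (op_series c T x))
      \<le> C * norm (partial N x - op_series c T x)" for N
    using partial_norm[of N "partial N x - op_series c T x"]
    by (simp add: C_def partial_def clinear_diff[OF clinear_powers] scaleR_diff_right sum_subtractf)
  ultimately have "(\<lambda>N. partial N (partial N x) - partial N (op_series c T x)) \<longlonglongrightarrow> 0"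
    by (metis (mono_tags, lifting) Lim_null_comparison always_eventually)
  from tendsto_add[OF this op_series_tendsto[of "op_series c T x"]] show ?thesis
    by (simp add: partial_def)
qed

lemma partial_partial_eq:
  "partial N (partial N x) = (\<Sum>(i, j)\<in>{..<N} \<times> {..<N}. scaleR (c i * c j) ((T ^^ (i + j)) x))"
  by (simp add: partial_def clinear_sum[OF clinear_powers] clinear_scaleR[OF clinear_powers]
      scaleR_sum_right funpow_add sum.cartesian_product)

lemma partial_cauchy_product_eq:
  "(\<Sum>n<N. scaleR (\<Sum>i\<le>n. c i * c (n - i)) ((T ^^ n) x)) =
    (\<Sum>(i, j)\<in>{(i, j). i + j < N}. scaleR (c i * c j) ((T ^^ (i + j)) x))"
  by (simp add: sum.triangle_reindex scaleR_sum_left)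

lemma cauchy_product_conv: "op_series_conv (\<lambda>n. \<Sum>i\<le>n. c i * c (n - i)) T M"
proof
  define a where "a k = \<bar>c k\<bar> * M ^ k" for k
  have summable_a: "summable (\<lambda>n. \<Sum>i\<le>n. a i * a (n - i))"
    using Cauchy_product_sums[of a a] summable_coeff M by (simp add: a_def abs_mult sums_summable)
  have bound: "\<bar>\<Sum>i\<le>n. c i * c (n - i)\<bar> * M ^ n \<le> (\<Sum>i\<le>n. a i * a (n - i))" for n
  proof -
    have "\<bar>\<Sum>i\<le>n. c i * c (n - i)\<bar> * M ^ n \<le> (\<Sum>i\<le>n. \<bar>c i * c (n - i)\<bar> * M ^ n)"
      using M by (simp add: sum_distrib_right[symmetric] mult_right_mono)
    also have "\<dots> = (\<Sum>i\<le>n. a i * a (n - i))"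
      by (intro sum.cong) (auto simp: a_def abs_mult algebra_simps simp flip: power_add)
    finally show ?thesis .
  qed
  show "summable (\<lambda>n. \<bar>\<Sum>i\<le>n. c i * c (n - i)\<bar> * M ^ n)"
    by (rule summable_comparison_test'[OF summable_a]) (use bound M in \<open>simp add: abs_mult\<close>)
qed (use T T_le M in auto)

lemma op_series_square:
  "op_series c T (op_series c T x) = op_series (\<lambda>n. \<Sum>i\<le>n. c i * c (n - i)) T x"
proof -
  define a where "a k = \<bar>c k\<bar> * M ^ k" for k
  define D where "D N = {..<N} \<times> {..<N} - {(i, j). i + j < N}" for N :: nat
  define err where "err N = partial N (partial N x) -
      (\<Sum>n<N. scaleR (\<Sum>i\<le>n. c i * c (n - i)) ((T ^^ n) x))" for N
  have term_le: "\<bar>c i * c j\<bar> * norm ((T ^^ (i + j)) x) \<le> a i * a j * norm x" for i j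
  proof -
    have "\<bar>c i * c j\<bar> * norm ((T ^^ (i + j)) x) \<le> \<bar>c i * c j\<bar> * (M ^ (i + j) * norm x)"
      by (simp add: mult_left_mono norm_power_le)
    also have "\<dots> = a i * a j * norm x" by (simp add: a_def abs_mult power_add algebra_simps)
    finally show ?thesis .
  qed
  have "{(i, j). i + j < N} \<subseteq> {..<N} \<times> {..<N}" for N :: nat by auto
  then have "err N = (\<Sum>(i, j)\<in>D N. scaleR (c i * c j) ((T ^^ (i + j)) x))" for N
    by (simp add: err_def D_def partial_partial_eq partial_cauchy_product_eq sum_diff)
  then have "norm (err N) \<le> (\<Sum>(i, j)\<in>D N. a i * a j * norm x)" for N
    by (auto intro!: norm_sum[THEN order_trans] sum_mono simp: case_prod_beta term_le)
  then have "norm (err N) \<le> (\<Sum>(i, j)\<in>D N. a i * a j) * norm x" for N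
    by (simp add: sum_distrib_right case_prod_beta)
  moreover have "(\<lambda>N. (\<Sum>(i, j)\<in>D N. a i * a j) * norm x) \<longlonglongrightarrow> 0 * norm x"
    unfolding D_def a_def using summable_coeff M
    by (intro tendsto_intros Cauchy_product_tail_tendsto_0) auto
  ultimately have "err \<longlonglongrightarrow> 0"
    by (metis (mono_tags, lifting) Lim_null_comparison always_eventually mult_zero_left)
  from tendsto_add[OF this op_series_conv.op_series_tendsto[OF cauchy_product_conv, of x]]
  have "(\<lambda>N. partial N (partial N x)) \<longlonglongrightarrow> op_series (\<lambda>n. \<Sum>i\<le>n. c i * c (n - i)) T x"
    by (simp add: err_def)
  then show ?thesis using partial_partial_tendsto LIMSEQ_unique by blast
qed

end


section \<open>Positive square roots\<close>

definition sqrt_coeff :: "nat \<Rightarrow> real" where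
  "sqrt_coeff k = (-1) ^ k * ((1/2::real) gchoose k)"

lemma sqrt_coeff_0 [simp]: "sqrt_coeff 0 = 1"
  by (simp add: sqrt_coeff_def)

lemma sqrt_coeff_Suc: "sqrt_coeff (Suc k) * (real k + 1) = sqrt_coeff k * (real k - 1/2)"
proof -
  have "real (Suc k) * ((1/2::real) gchoose (Suc k)) = (1/2 - real k) * ((1/2) gchoose k)"
    using gbinomial_mult_1[of "1/2::real" k] by (simp add: algebra_simps)
  moreover have "sqrt_coeff (Suc k) * (real k + 1) =
      - ((-1) ^ k * (real (Suc k) * ((1/2::real) gchoose (Suc k))))"
    by (simp add: sqrt_coeff_def algebra_simps)
  ultimately have "sqrt_coeff (Suc k) * (real k + 1) =
      - ((-1) ^ k * ((1/2 - real k) * ((1/2) gchoose k)))"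
    by simp
  then show ?thesis by (simp add: sqrt_coeff_def algebra_simps)
qed

lemma sqrt_coeff_nonpos: "k \<ge> 1 \<Longrightarrow> sqrt_coeff k \<le> 0"
proof (induction k rule: dec_induct)
  case base then show ?case using sqrt_coeff_Suc[of 0] by simp
next
  case (step k)
  then have "sqrt_coeff (Suc k) = sqrt_coeff k * (real k - 1/2) / (real k + 1)"
    using sqrt_coeff_Suc[of k] by (simp add: field_simps)
  then show ?case using step by (simp add: mult_nonpos_nonneg divide_nonpos_pos)
qed

lemma sum_sqrt_coeff: "(\<Sum>i<Suc n. sqrt_coeff i) = (1 - 2 * real n) * sqrt_coeff n"
proof (induction n)
  case (Suc n)
  then show ?case using sqrt_coeff_Suc[of n] by (simp add: algebra_simps)
qed simp

lemma sum_abs_sqrt_coeff_Suc_le: "(\<Sum>k<n. \<bar>sqrt_coeff (Suc k)\<bar>) \<le> 1"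
proof -
  have "(\<Sum>k<n. \<bar>sqrt_coeff (Suc k)\<bar>) = - (\<Sum>k<n. sqrt_coeff (Suc k))"
    using sqrt_coeff_nonpos by (simp flip: sum_negf)
  also have "\<dots> = 1 - (\<Sum>i<Suc n. sqrt_coeff i)"
    by (simp del: sum.lessThan_Suc add: sum.lessThan_Suc_shift)
  moreover have "0 \<le> (\<Sum>i<Suc n. sqrt_coeff i)"
    using sqrt_coeff_nonpos[of n] unfolding sum_sqrt_coeff
    by (cases "n = 0") (auto intro: mult_nonpos_nonpos)
  ultimately show ?thesis by linarith
qed

lemma summable_abs_sqrt_coeff_Suc: "summable (\<lambda>k. \<bar>sqrt_coeff (Suc k)\<bar>)"
  by (rule summableI_nonneg_bounded[OF _ sum_abs_sqrt_coeff_Suc_le]) simp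

lemma summable_abs_sqrt_coeff: "summable (\<lambda>k. \<bar>sqrt_coeff k\<bar>)"
  using summable_abs_sqrt_coeff_Suc by (subst summable_Suc_iff[symmetric])

lemma sqrt_coeff_cauchy_product:
  "(\<Sum>i\<le>n. sqrt_coeff i * sqrt_coeff (n - i)) = (if n = 0 then 1 else if n = 1 then -1 else 0)"
proof -
  have "(\<Sum>i\<le>n. sqrt_coeff i * sqrt_coeff (n - i)) =
      (-1) ^ n * (\<Sum>i\<le>n. ((1/2::real) gchoose i) * ((1/2) gchoose (n - i)))"
    unfolding sum_distrib_left
    by (intro sum.cong) (auto simp: sqrt_coeff_def algebra_simps simp flip: power_add)
  also have "\<dots> = (-1) ^ n * of_nat (1 choose n)"
    using gbinomial_Vandermonde[of "1/2::real" "1/2" n] binomial_gbinomial[of 1 n, where 'a=real]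
    by (simp add: atLeast0AtMost)
  finally show ?thesis by (cases n) (auto simp: binomial_eq_0)
qed

text \<open>The coefficient of index 0 is 1 and the others are nonpositive with absolute sum at most 1.\<close>

lemma sqrt_coeff_series_nonneg:
  assumes dominated: "\<And>k. \<bar>r k\<bar> \<le> r 0"
  shows "0 \<le> (\<Sum>k. sqrt_coeff k * r k)"
proof -
  have abs_bound: "\<bar>sqrt_coeff k * r k\<bar> \<le> \<bar>sqrt_coeff k\<bar> * r 0" for k
    unfolding abs_mult by (intro mult_left_mono dominated) simp
  have summable: "summable (\<lambda>k. sqrt_coeff k * r k)"
    by (rule summable_comparison_test[OF _ summable_mult2[OF summable_abs_sqrt_coeff]])
       (auto intro: abs_bound)
  have "- ((\<Sum>k. \<bar>sqrt_coeff (Suc k)\<bar>) * r 0) = (\<Sum>k. - (\<bar>sqrt_coeff (Suc k)\<bar> * r 0))"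
    using suminf_minus[OF summable_mult2[OF summable_abs_sqrt_coeff_Suc]]
      suminf_mult2[OF summable_abs_sqrt_coeff_Suc] by simp
  also have "\<dots> \<le> (\<Sum>k. sqrt_coeff (Suc k) * r (Suc k))"
  proof (rule suminf_le)
    show "- (\<bar>sqrt_coeff (Suc k)\<bar> * r 0) \<le> sqrt_coeff (Suc k) * r (Suc k)" for k
      using abs_bound[of "Suc k"] by (simp add: abs_le_iff)
    show "summable (\<lambda>k. - (\<bar>sqrt_coeff (Suc k)\<bar> * r 0))"
      by (intro summable_minus summable_mult2 summable_abs_sqrt_coeff_Suc)
    show "summable (\<lambda>k. sqrt_coeff (Suc k) * r (Suc k))"
      using summable by (subst summable_Suc_iff)
  qed
  finally have "- ((\<Sum>k. \<bar>sqrt_coeff (Suc k)\<bar>) * r 0) + r 0 \<le> (\<Sum>k. sqrt_coeff k * r k)"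
    using suminf_split_head[OF summable] by simp
  moreover have "(\<Sum>k. \<bar>sqrt_coeff (Suc k)\<bar>) * r 0 \<le> 1 * r 0"
    using dominated[of 0] suminf_le_const[OF summable_abs_sqrt_coeff_Suc sum_abs_sqrt_coeff_Suc_le]
    by (intro mult_right_mono) auto
  ultimately show ?thesis by linarith
qed

text \<open>For 0 \<le> P \<le> a the operator T = I - P/a satisfies 0 \<le> T \<le> I, and
  \<surd>P = \<surd>a (I - T)^(1/2) = \<surd>a \<Sum> sqrt_coeff k T^k.\<close>

definition sqrt_arg :: "('a::complex_hilbert_space \<Rightarrow> 'a) \<Rightarrow> real \<Rightarrow> 'a \<Rightarrow> 'a" where
  "sqrt_arg P a x = x - scaleR (1 / a) (P x)"

definition sqrt_series :: "('a::complex_hilbert_space \<Rightarrow> 'a) \<Rightarrow> real \<Rightarrow> 'a \<Rightarrow> 'a" where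
  "sqrt_series P a x = scaleR (sqrt a) (op_series sqrt_coeff (sqrt_arg P a) x)"

locale sqrt_setting =
  fixes P :: "'a::complex_hilbert_space \<Rightarrow> 'a" and a :: real
  assumes P: "pos_op P" and a: "0 < a" and P_le: "\<And>x. qform P x \<le> a * norm x ^ 2"
begin

abbreviation "T \<equiv> sqrt_arg P a"
abbreviation "R \<equiv> sqrt_series P a"

lemma sqrt_arg_bounded_clinear: "bounded_clinear T"
  unfolding sqrt_arg_def
  by (intro bounded_clinear_diff bounded_clinear_id bounded_clinear_scaleR pos_op_bounded_clinear P)

lemma sqrt_arg_selfadj: "selfadj T"
  using pos_op_selfadj[OF P]
  by (simp add: selfadj_def sqrt_arg_def cinner_diff_left cinner_diff_right cinner_scaleR_left
      cinner_scaleR_right)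

lemma qform_sqrt_arg: "0 \<le> qform T x" "qform T x \<le> norm x ^ 2"
proof -
  have "qform T x = norm x ^ 2 - qform P x / a"
    by (simp add: qform_def sqrt_arg_def cinner_diff_left cinner_scaleR_left cinner_self_Re)
  moreover have "qform P x / a \<le> norm x ^ 2" using P_le[of x] a
    by (simp add: divide_le_eq mult.commute)
  moreover have "0 \<le> qform P x / a" using qform_nonneg[OF P] a by simp
  ultimately show "0 \<le> qform T x" "qform T x \<le> norm x ^ 2" by simp_all
qed

lemma norm_sqrt_arg_le: "norm (T x) \<le> 1 * norm x"
  using qform_sqrt_arg
    by (intro selfadj_norm_bound bounded_clinear_clinear sqrt_arg_bounded_clinear
        sqrt_arg_selfadj) auto

lemma sqrt_arg_conv: "op_series_conv sqrt_coeff T 1"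
  by unfold_locales (use sqrt_arg_bounded_clinear norm_sqrt_arg_le summable_abs_sqrt_coeff in auto)

lemma sqrt_series_bounded_clinear: "bounded_clinear R"
  unfolding sqrt_series_def
    by (intro bounded_clinear_scaleR op_series_conv.op_series_bounded_clinear[OF sqrt_arg_conv])

lemma sqrt_series_selfadj: "selfadj R"
  using op_series_conv.op_series_selfadj[OF sqrt_arg_conv sqrt_arg_selfadj]
  by (simp add: selfadj_def sqrt_series_def cinner_scaleR_left cinner_scaleR_right)

lemma sqrt_series_pos: "pos_op R"
  unfolding pos_op_def
proof (intro conjI allI sqrt_series_bounded_clinear)
  fix x
  show "cinner (R x) x \<in> \<real>"
    using selfadj_cinner_real[OF sqrt_series_selfadj] by simp
  have "\<bar>qform (T ^^ k) x\<bar> \<le> qform (T ^^ 0) x" for k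
  proof -
    have "\<bar>qform (T ^^ k) x\<bar> \<le> norm ((T ^^ k) x) * norm x"
      unfolding qform_def using abs_Re_le_cmod cauchy_schwarz order_trans by blast
    also have "\<dots> \<le> (1 ^ k * norm x) * norm x"
      by (intro mult_right_mono op_series_conv.norm_power_le[OF sqrt_arg_conv]) simp
    finally show ?thesis by (simp add: qform_def cinner_self_Re power2_eq_square)
  qed
  then have "0 \<le> qform (op_series sqrt_coeff T) x"
    by (simp add: op_series_conv.op_series_qform[OF sqrt_arg_conv] sqrt_coeff_series_nonneg)
  then show "0 \<le> Re (cinner (R x) x)"
    using a by (simp add: sqrt_series_def qform_def cinner_scaleR_left)
qed

lemma sqrt_series_square: "R (R x) = P x"
proof -
  have "R (R x) = scaleR a (op_series sqrt_coeff T (op_series sqrt_coeff T x))"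
    using a
      by (simp add: sqrt_series_def clinear_scaleR[OF op_series_conv.op_series_clinear[OF
          sqrt_arg_conv]])
  also have "op_series sqrt_coeff T (op_series sqrt_coeff T x) =
      op_series (\<lambda>n. if n = 0 then 1 else if n = 1 then -1 else 0) T x"
    using op_series_conv.op_series_square[OF sqrt_arg_conv] by (simp add: sqrt_coeff_cauchy_product)
  also have "\<dots> = (\<Sum>k\<in>{0, 1}. scaleR (if k = 0 then 1 else if k = 1 then -1 else 0) ((T ^^ k) x))"
    unfolding op_series_def by (rule suminf_finite) auto
  finally show ?thesis using a by (simp add: sqrt_arg_def)
qed

lemma sqrt_series_commute:
  assumes S: "bounded_clinear S" and SP: "\<And>x. S (P x) = P (S x)"
  shows "S (R x) = R (S x)"
proof -
  have "S (T x) = T (S x)" for x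
    using bounded_clinear_clinear[OF S] SP by (simp add: sqrt_arg_def clinear_diff clinear_scaleR)
  then show ?thesis
    using op_series_conv.op_series_commute[OF sqrt_arg_conv S, of T] bounded_clinear_clinear[OF S]
    by (simp add: sqrt_series_def clinear_scaleR)
qed

text \<open>A second square root S commutes with P = S^2, hence with R; then (R + S)(R - S) = 0, and
  positivity forces R - S to vanish on its own range.\<close>

lemma sqrt_series_unique:
  assumes S: "pos_op S" and SS: "S \<circ> S = P"
  shows "S = R"
proof
  fix x
  have S_bcl: "bounded_clinear S" using S by (rule pos_op_bounded_clinear)
  have SSx: "S (S y) = P y" for y using SS by (metis comp_apply)
  have SR: "S (R y) = R (S y)" for y by (rule sqrt_series_commute[OF S_bcl]) (simp flip: SSx)
  define D where "D y = R y - S y" for y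
  have RD: "R (D y) = 0" and SD: "S (D y) = 0" for y
  proof -
    have "R (D y) + S (D y) = 0"
      using bounded_clinear_clinear[OF sqrt_series_bounded_clinear] bounded_clinear_clinear[OF
          S_bcl]
      by (simp add: D_def clinear_diff sqrt_series_square SSx SR)
    then have "qform R (D y) + qform S (D y) = Re (cinner 0 (D y))"
      by (simp only: qform_def flip: plus_complex.sel(1) cinner_add_left)
    then have "qform R (D y) + qform S (D y) = 0" by simp
    then have "qform R (D y) = 0" "qform S (D y) = 0"
      using qform_nonneg[OF sqrt_series_pos] qform_nonneg[OF S] by (smt (verit))+
    then show "R (D y) = 0" "S (D y) = 0"
      using pos_op_qform_eq_0[OF sqrt_series_pos] pos_op_qform_eq_0[OF S] by blast+
  qed
  have "cinner (D x) (D x) = cinner (D (D x)) x"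
    using sqrt_series_selfadj pos_op_selfadj[OF S]
    by (simp add: D_def selfadj_def cinner_diff_left cinner_diff_right)
  then show "S x = R x" using RD[of x] SD[of x] by (simp add: D_def)
qed

lemma sqrt_op_eq: "sqrt_op P = R"
  unfolding sqrt_op_def
proof (rule the_equality)
  show "pos_op R \<and> R \<circ> R = P" using sqrt_series_pos sqrt_series_square by (auto simp: fun_eq_iff)
qed (use sqrt_series_unique in blast)

end

section \<open>Absolute values\<close>

lemma qform_gram: "bounded_clinear T \<Longrightarrow> qform (adj T \<circ> T) x = norm (T x) ^ 2"
  by (simp add: qform_def adj_cinner_left cinner_self_Re)

lemma pos_op_gram: "bounded_clinear T \<Longrightarrow> pos_op (adj T \<circ> T)"
  unfolding pos_op_def
  by (auto simp: adj_cinner_left cinner_self bounded_clinear_compose[unfolded o_def]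
      adj_bounded_clinear comp_def)

lemma sqrt_setting_gram:
  assumes T: "bounded_clinear T" and K: "\<And>x. norm (T x) \<le> K * norm x"
  shows "sqrt_setting (adj T \<circ> T) (K ^ 2 + 1)"
proof
  show "pos_op (adj T \<circ> T)" by (rule pos_op_gram[OF T])
  show "0 < K ^ 2 + 1" by (simp add: add_nonneg_pos)
  fix x
  have "norm (T x) ^ 2 \<le> (K * norm x) ^ 2"
    using K[of x] by (intro power_mono) auto
  also have "\<dots> \<le> (K ^ 2 + 1) * norm x ^ 2" by (simp add: algebra_simps)
  finally show "qform (adj T \<circ> T) x \<le> (K ^ 2 + 1) * norm x ^ 2" by (simp add: qform_gram[OF T])
qed

lemma abs_op_eq_sqrt_series:
  "bounded_clinear T \<Longrightarrow> (\<And>x. norm (T x) \<le> K * norm x) \<Longrightarrow>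
    abs_op T = sqrt_series (adj T \<circ> T) (K ^ 2 + 1)"
  unfolding abs_op_def by (rule sqrt_setting.sqrt_op_eq[OF sqrt_setting_gram])

lemma abs_op_pos: "bounded_clinear T \<Longrightarrow> pos_op (abs_op T)"
  using abs_op_eq_sqrt_series[OF _ bounded_clinear_onorm]
    sqrt_setting.sqrt_series_pos[OF sqrt_setting_gram[OF _ bounded_clinear_onorm]] by metis

lemma abs_op_square: "bounded_clinear T \<Longrightarrow> abs_op T (abs_op T x) = adj T (T x)"
  using abs_op_eq_sqrt_series[OF _ bounded_clinear_onorm]
    sqrt_setting.sqrt_series_square[OF sqrt_setting_gram[OF _ bounded_clinear_onorm]]
      by (metis comp_apply)

text \<open>Both square roots are power series, with the same scale \<parallel>A\<parallel>^2 + 1, in operators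
  intertwined by A.\<close>

lemma abs_op_intertwine:
  assumes A: "bounded_clinear A"
  shows "A (abs_op A x) = abs_op (adj A) (A x)"
proof -
  have A': "bounded_clinear (adj A)" by (rule adj_bounded_clinear[OF A])
  have "A (sqrt_arg (adj A \<circ> A) (onorm A ^ 2 + 1) y) =
      sqrt_arg (adj (adj A) \<circ> adj A) (onorm A ^ 2 + 1) (A y)" for y
    using bounded_clinear_clinear[OF A]
      by (simp add: sqrt_arg_def clinear_diff clinear_scaleR adj_adj[OF A])
  then have "A (op_series sqrt_coeff (sqrt_arg (adj A \<circ> A) (onorm A ^ 2 + 1)) x) =
      op_series sqrt_coeff (sqrt_arg (adj (adj A) \<circ> adj A) (onorm A ^ 2 + 1)) (A x)"
    by (intro op_series_conv.op_series_commute[OF sqrt_setting.sqrt_arg_conv[OF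
        sqrt_setting_gram[OF A
          bounded_clinear_onorm[OF A]]] A])
  then show ?thesis
    using bounded_clinear_clinear[OF A]
    by (simp add: abs_op_eq_sqrt_series[OF A bounded_clinear_onorm[OF A]]
        abs_op_eq_sqrt_series[OF A' adj_norm[OF A]] sqrt_series_def clinear_scaleR)
qed


section \<open>Operators symmetric for a positive semi-inner product\<close>

definition psymmetric :: "('a::complex_hilbert_space \<Rightarrow> 'a) \<Rightarrow> ('a \<Rightarrow> 'a) \<Rightarrow> bool" where
  "psymmetric P S \<longleftrightarrow> (\<forall>u v. cinner (P (S u)) v = cinner u (P (S v)))"

lemma psymmetric_selfadj: "psymmetric P S \<Longrightarrow> selfadj (\<lambda>x. P (S x))"
  by (simp add: psymmetric_def selfadj_def)

lemma psymmetric_cinner_real: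
  "psymmetric P B \<Longrightarrow> cinner (P (B x)) x = complex_of_real (Re (cinner (P (B x)) x))"
  using selfadj_cinner_real[OF psymmetric_selfadj] by (simp add: qform_def)

lemma psymmetric_cinner_swap:
  "pos_op P \<Longrightarrow> psymmetric P S \<Longrightarrow> cinner (P (S u)) v = cinner (P u) (S v)"
  using pos_op_selfadj[of P] by (simp add: psymmetric_def selfadj_def)

lemma psymmetric_funpow:
  assumes P: "pos_op P" and S: "psymmetric P S"
  shows "psymmetric P (S ^^ k)"
  unfolding psymmetric_def
proof (induction k)
  case 0 then show ?case using pos_op_selfadj[OF P] by (simp add: selfadj_def)
next
  case (Suc k)
  show ?case
  proof (intro allI)
    fix u v
    have "cinner (P ((S ^^ Suc k) u)) v = cinner (P ((S ^^ k) u)) (S v)"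
      using psymmetric_cinner_swap[OF P S] by simp
    also have "\<dots> = cinner u (P ((S ^^ Suc k) v))" using Suc by (simp add: funpow_swap1)
    finally show "cinner (P ((S ^^ Suc k) u)) v = cinner u (P ((S ^^ Suc k) v))" .
  qed
qed

lemma qform_square_le:
  assumes P: "pos_op P" and S: "psymmetric P S"
  shows "qform P (S x) ^ 2 \<le> qform P (S (S x)) * qform P x"
proof -
  have "qform P (S x) = Re (cinner (P (S (S x))) x)"
    using psymmetric_cinner_swap[OF P S, of "S x" x] by (simp add: qform_def)
  also have "\<dots> \<le> sqrt (qform P (S (S x)) * qform P x)"
    using pos_op_cauchy_schwarz[OF P] complex_Re_le_cmod order_trans by blast
  finally have "qform P (S x) ^ 2 \<le> sqrt (qform P (S (S x)) * qform P x) ^ 2"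
    using qform_nonneg[OF P] by (intro power_mono) auto
  then show ?thesis using qform_nonneg[OF P] by simp
qed

lemma qform_doubling_le:
  assumes P: "pos_op P" and S: "psymmetric P S"
  shows "qform P (S x) ^ (2 ^ n) \<le> qform P ((S ^^ (2 ^ n)) x) * qform P x ^ (2 ^ n - 1)"
proof (induction n)
  case (Suc n)
  define m :: nat where "m = 2 ^ n"
  have "qform P (S x) ^ (2 ^ Suc n) = (qform P (S x) ^ m) ^ 2"
    by (simp add: m_def power_mult[symmetric] mult.commute)
  also have "\<dots> \<le> (qform P ((S ^^ m) x) * qform P x ^ (m - 1)) ^ 2"
    using Suc qform_nonneg[OF P] by (intro power_mono) (auto simp: m_def)
  also have "\<dots> = qform P ((S ^^ m) x) ^ 2 * qform P x ^ (2 * (m - 1))"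
    by (simp add: power_mult_distrib power_mult[symmetric] mult.commute)
  also have "\<dots> \<le> (qform P ((S ^^ m) ((S ^^ m) x)) * qform P x) * qform P x ^ (2 * (m - 1))"
    by (intro mult_right_mono qform_square_le[OF P psymmetric_funpow[OF P S]])
       (simp add: qform_nonneg[OF P])
  also have "\<dots> = qform P ((S ^^ (2 ^ Suc n)) x) * qform P x ^ (2 ^ Suc n - 1)"
  proof -
    have "1 \<le> m" "2 * m = 2 ^ Suc n" by (simp_all add: m_def)
    then have exps: "2 ^ Suc n - 1 = Suc (2 * (m - 1))" "2 ^ Suc n = m + m" by linarith+
    have "(S ^^ m) ((S ^^ m) x) = (S ^^ (2 ^ Suc n)) x"
      by (simp only: exps(2) funpow_add comp_apply)
    moreover have "qform P x * qform P x ^ (2 * (m - 1)) = qform P x ^ (2 ^ Suc n - 1)"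
      unfolding exps(1) by (rule power_Suc[symmetric])
    ultimately show ?thesis by (simp add: mult.assoc)
  qed
  finally show ?case .
qed simp

lemma le_of_power_doubling_bound:
  fixes a b q C :: real
  assumes "0 \<le> b" "0 \<le> q"
    and bound: "\<And>n. a ^ (2 ^ n) \<le> C * b ^ (2 ^ n) * q ^ (2 ^ n - 1)"
  shows "a \<le> b * q"
proof (rule ccontr)
  assume "\<not> a \<le> b * q"
  moreover have "0 \<le> b * q" using assms by simp
  ultimately have a: "a > b * q" "a > 0" by linarith+
  show False
  proof (cases "b = 0 \<or> q = 0")
    case True
    then have "a ^ 2 \<le> 0" using bound[of 1] by auto
    then show False using a by (simp add: power2_eq_square mult_le_0_iff)
  next
    case False
    then have pos: "b > 0" "q > 0" using assms by auto
    define \<rho> where "\<rho> = a / (b * q)"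
    have "\<rho> > 1" using a pos by (simp add: \<rho>_def)
    obtain n where n: "C / q < \<rho> ^ n" using real_arch_pow[OF \<open>\<rho> > 1\<close>] by blast
    have "q * q ^ (2 ^ n - 1) = q ^ (2 ^ n)" using power_Suc[of q "2 ^ n - 1"] by simp
    then have "\<rho> ^ (2 ^ n) * q * (b ^ (2 ^ n) * q ^ (2 ^ n - 1)) = (\<rho> * b * q) ^ (2 ^ n)"
      by (simp add: power_mult_distrib mult_ac)
    also have "\<rho> * b * q = a" using pos by (simp add: \<rho>_def)
    also have "a ^ (2 ^ n) \<le> C * (b ^ (2 ^ n) * q ^ (2 ^ n - 1))" using bound[of n]
      by (simp add: mult.assoc)
    finally have "\<rho> ^ (2 ^ n) * q \<le> C" using pos by (simp add: mult_le_cancel_right)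
    moreover have "\<rho> ^ n \<le> \<rho> ^ (2 ^ n)"
      using \<open>\<rho> > 1\<close> by (intro power_increasing) (auto intro: less_imp_le[OF less_exp])
    moreover have "C < \<rho> ^ n * q" using n pos by (simp add: divide_less_eq)
    ultimately show False
      using mult_right_mono[of "\<rho> ^ n" "\<rho> ^ (2 ^ n)" q] pos by linarith
  qed
qed

text \<open>By iterated Cauchy--Schwarz, \<langle>PSx, Sx\<rangle>^(2^n) \<le> \<langle>PS^(2^n)x, S^(2^n)x\<rangle> \<langle>Px, x\<rangle>^(2^n - 1),
  and the first factor grows at most like \<parallel>S\<parallel>^(2^(n+1)).\<close>

lemma psymmetric_qform_le:
  assumes P: "pos_op P" and S: "bounded_clinear S" "psymmetric P S"
  shows "qform P (S x) \<le> onorm S ^ 2 * qform P x"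
proof (rule le_of_power_doubling_bound)
  fix n
  have "qform P ((S ^^ (2 ^ n)) x) \<le> onorm P * norm ((S ^^ (2 ^ n)) x) ^ 2"
    by (rule qform_le_onorm[OF P])
  also have "\<dots> \<le> onorm P * (onorm S ^ (2 ^ n) * norm x) ^ 2"
    using P S by (intro mult_left_mono power_mono norm_funpow_le)
      (auto simp: bounded_clinear_onorm bounded_clinear_onorm_nonneg pos_op_bounded_clinear)
  also have "\<dots> = onorm P * norm x ^ 2 * (onorm S ^ 2) ^ (2 ^ n)"
    by (simp add: power_mult_distrib power_mult[symmetric] mult.commute)
  finally show "qform P (S x) ^ (2 ^ n)
      \<le> onorm P * norm x ^ 2 * (onorm S ^ 2) ^ (2 ^ n) * qform P x ^ (2 ^ n - 1)"
    using qform_doubling_le[OF P S(2), of x n] qform_nonneg[OF P, of x]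
    by (meson mult_right_mono order_trans zero_le_power)
qed (use qform_nonneg[OF P] in auto)

lemma psymmetric_form_le_onorm:
  assumes P: "pos_op P" and B: "bounded_clinear B" "psymmetric P B"
  shows "cmod (cinner (P (B x)) x) \<le> onorm B * qform P x"
proof -
  have "cmod (cinner (P (B x)) x) \<le> sqrt (qform P (B x) * qform P x)"
    by (rule pos_op_cauchy_schwarz[OF P])
  also have "\<dots> \<le> sqrt ((onorm B ^ 2 * qform P x) * qform P x)"
    by (intro real_sqrt_le_mono mult_right_mono psymmetric_qform_le[OF P B] qform_nonneg[OF P])
  also have "\<dots> = onorm B * qform P x"
    using qform_nonneg[OF P, of x] bounded_clinear_onorm_nonneg[OF B(1)]
    by (simp add: real_sqrt_mult power2_eq_square)
  finally show ?thesis .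
qed

lemma psymmetric_right_inverse:
  assumes P: "pos_op P" and T: "psymmetric P T" and inverse: "\<And>y. T (S y) = y"
  shows "psymmetric P S"
  unfolding psymmetric_def
proof (intro allI)
  fix u v
  have "cinner (P (S u)) v = cinner (P (T (S u))) (S v)"
    using psymmetric_cinner_swap[OF P T, of "S u" "S v"] pos_op_selfadj[OF P] inverse[of v]
    by (simp add: selfadj_def)
  also have "\<dots> = cinner u (P (S v))" using pos_op_selfadj[OF P] inverse by (simp add: selfadj_def)
  finally show "cinner (P (S u)) v = cinner u (P (S v))" .
qed

text \<open>\<langle>Px, x\<rangle> = \<langle>PT(Sx), x\<rangle> \<le> \<langle>PTSx, Sx\<rangle>^(1/2) \<langle>PTx, x\<rangle>^(1/2), and
  \<langle>PTSx, Sx\<rangle> = \<langle>Px, Sx\<rangle> \<le> \<parallel>S\<parallel> \<langle>Px, x\<rangle> by the previous lemma applied to S.\<close>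

lemma qform_le_right_inverse:
  assumes P: "pos_op P" and T: "clinear T" "psymmetric P T"
    and T_nonneg: "\<And>x. 0 \<le> qform (\<lambda>x. P (T x)) x"
    and S: "bounded_clinear S" "\<And>y. T (S y) = y"
  shows "qform P x \<le> onorm S * qform (\<lambda>x. P (T x)) x"
proof -
  define Q where "Q = (\<lambda>x. P (T x))"
  have Q: "clinear Q" "selfadj Q"
    using clinear_compose[OF pos_op_clinear[OF P] T(1)] psymmetric_selfadj[OF T(2)]
    by (simp_all add: Q_def)
  have "qform Q (S x) = Re (cinner (P x) (S x))" by (simp add: qform_def Q_def S(2))
  also have "\<dots> \<le> sqrt (qform P x * qform P (S x))"
    using pos_op_cauchy_schwarz[OF P] complex_Re_le_cmod order_trans by blast
  also have "\<dots> \<le> sqrt (qform P x * (onorm S ^ 2 * qform P x))"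
    by (intro real_sqrt_le_mono mult_left_mono psymmetric_qform_le[OF P S(1)]
        psymmetric_right_inverse[OF P T(2) S(2)] qform_nonneg[OF P])
  also have "\<dots> = onorm S * qform P x"
    using qform_nonneg[OF P, of x] bounded_clinear_onorm_nonneg[OF S(1)]
    by (simp add: real_sqrt_mult power2_eq_square)
  finally have QS: "qform Q (S x) \<le> onorm S * qform P x" .
  have "qform P x = Re (cinner (Q (S x)) x)" by (simp add: qform_def Q_def S(2))
  also have "\<dots> \<le> sqrt (qform Q (S x) * qform Q x)"
    using hermitian_form_bound[OF Q Q(1), of 1 "S x" x] T_nonneg complex_Re_le_cmod order_trans
    by (fastforce simp: Q_def)
  also have "\<dots> \<le> sqrt (onorm S * qform P x * qform Q x)"
    using T_nonneg by (intro real_sqrt_le_mono mult_right_mono QS) (simp add: Q_def)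
  finally have "qform P x ^ 2 \<le> sqrt (onorm S * qform P x * qform Q x) ^ 2"
    using qform_nonneg[OF P, of x] by (intro power_mono) auto
  then have "qform P x ^ 2 \<le> qform P x * (onorm S * qform Q x)"
    using qform_nonneg[OF P, of x] T_nonneg[of x] bounded_clinear_onorm_nonneg[OF S(1)]
    by (simp add: Q_def algebra_simps)
  then show ?thesis
    using qform_nonneg[OF P, of x] T_nonneg[of x] bounded_clinear_onorm_nonneg[OF S(1)]
    by (cases "qform P x = 0") (auto simp: Q_def power2_eq_square mult_le_cancel_left)
qed


definition prange :: "('a::complex_hilbert_space \<Rightarrow> 'a) \<Rightarrow> ('a \<Rightarrow> 'a) \<Rightarrow> real set" where
  "prange P B = {Re (cinner (P (B x)) x) | x. qform P x = 1}"

lemma prange_bdd_above: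
  assumes P: "pos_op P" and B: "bounded_clinear B" "psymmetric P B"
  shows "bdd_above (prange P B)"
proof (rule bdd_aboveI[of _ "onorm B"])
  fix w assume "w \<in> prange P B"
  then obtain x where x: "w = Re (cinner (P (B x)) x)" "qform P x = 1" by (auto simp: prange_def)
  then have "w \<le> cmod (cinner (P (B x)) x)" by (simp add: complex_Re_le_cmod)
  also have "\<dots> \<le> onorm B" using psymmetric_form_le_onorm[OF P B, of x] x(2) by simp
  finally show "w \<le> onorm B" .
qed

lemma prange_normalize:
  assumes P: "pos_op P" and B: "clinear B" and pos: "qform P x > 0"
  shows "Re (cinner (P (B x)) x) / qform P x \<in> prange P B"
proof -
  define y where "y = scaleR (1 / sqrt (qform P x)) x"
  have "qform P y = 1" "Re (cinner (P (B y)) y) = Re (cinner (P (B x)) x) / qform P x"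
    using pos pos_op_clinear[OF P] B
    by (simp_all add: y_def qform_scaleR clinear_scaleR cinner_scaleR_left cinner_scaleR_right
        power_divide power2_eq_square)
  then show ?thesis unfolding prange_def by (metis (mono_tags, lifting) mem_Collect_eq)
qed

lemma form_le_Sup_prange:
  assumes P: "pos_op P" and B: "bounded_clinear B" "psymmetric P B" and "prange P B \<noteq> {}"
  shows "Re (cinner (P (B x)) x) \<le> Sup (prange P B) * qform P x"
proof (cases "qform P x > 0")
  case True
  then have "Re (cinner (P (B x)) x) / qform P x \<le> Sup (prange P B)"
    by (intro cSup_upper prange_bdd_above[OF P B] prange_normalize[OF P bounded_clinear_clinear[OF
        B(1)]])
  then show ?thesis using True by (simp add: divide_le_eq)
next
  case False
  then have "qform P x = 0" using qform_nonneg[OF P, of x] by simp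
  then show ?thesis
    using psymmetric_form_le_onorm[OF P B, of x] complex_Re_le_cmod[of "cinner (P (B x)) x"]
    by simp
qed

text \<open>Otherwise s - B, with s the supremum, is a nonnegative symmetric operator with a bounded
  inverse, hence bounded below on the seminorm sphere, contradicting the choice of s.\<close>

lemma Sup_prange_in_spectrum:
  assumes P: "pos_op P" and B: "bounded_clinear B" "psymmetric P B" and ne: "prange P B \<noteq> {}"
  shows "complex_of_real (Sup (prange P B)) \<in> spectrum_op B"
proof (rule ccontr)
  define s where "s = Sup (prange P B)"
  assume "complex_of_real (Sup (prange P B)) \<notin> spectrum_op B"
  then obtain S where S: "bounded_clinear S" "(\<lambda>x. B x - scaleC (complex_of_real s) x) \<circ> S = id"
    unfolding spectrum_op_def s_def by blast
  define T where "T x = scaleC (complex_of_real s) x - B x" for x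
  have linB: "clinear B" by (rule bounded_clinear_clinear[OF B(1)])
  have T: "clinear T"
    unfolding T_def clinear_def using linB
    by (simp add: clinear_add clinear_scaleC scaleC_add_right scaleC_diff_right scaleC_scaleC
        mult.commute)
  have inverse: "T (- S y) = y" for y
    using fun_cong[OF S(2), of y] linB by (simp add: T_def clinear_minus scaleC_minus_right)
  have qform_shift: "qform (\<lambda>x. P (T x)) x = s * qform P x - Re (cinner (P (B x)) x)" for x
    using pos_op_clinear[OF P]
    by (simp add: qform_def T_def clinear_diff clinear_scaleC cinner_diff_left cinner_scaleC_left)
  have "psymmetric P T"
    using B(2) pos_op_selfadj[OF P] pos_op_clinear[OF P]
    by (simp add: psymmetric_def selfadj_def T_def clinear_diff clinear_scaleC cinner_diff_left
        cinner_diff_right cinner_scaleC_left cinner_scaleC_right)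
  then have gap: "qform P x \<le> onorm (\<lambda>x. - S x) * (s * qform P x - Re (cinner (P (B x)) x))" for x
    using qform_le_right_inverse[OF P T _ _ bounded_clinear_minus[OF S(1)] inverse]
      form_le_Sup_prange[OF P B ne] by (simp add: qform_shift s_def)
  define K where "K = onorm (\<lambda>x. - S x)"
  obtain x0 where "qform P x0 = 1" using ne by (auto simp: prange_def)
  then have "K > 0"
    using gap[of x0] bounded_clinear_onorm_nonneg[OF bounded_clinear_minus[OF S(1)]]
    by (cases "K = 0") (auto simp: K_def)
  have "Sup (prange P B) \<le> s - 1 / K"
  proof (rule cSup_least[OF ne])
    fix w assume "w \<in> prange P B"
    then obtain x where "w = Re (cinner (P (B x)) x)" "qform P x = 1" by (auto simp: prange_def)
    then show "w \<le> s - 1 / K" using gap[of x] \<open>K > 0\<close> by (simp add: K_def field_simps)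
  qed
  then show False using \<open>K > 0\<close> by (simp add: s_def)
qed

lemma psymmetric_form_le_specrad:
  assumes P: "pos_op P" and B: "bounded_clinear B" "psymmetric P B"
  shows "cmod (cinner (P (B x)) x) \<le> specrad B * qform P x"
proof (cases "prange P B = {}")
  case True
  then have "qform P x = 0"
    using prange_normalize[OF P bounded_clinear_clinear[OF B(1)], of x] qform_nonneg[OF P, of x]
    by (cases "qform P x > 0") auto
  then show ?thesis using psymmetric_form_le_onorm[OF P B, of x] by simp
next
  case False
  have B': "bounded_clinear (\<lambda>x. - B x)" "psymmetric P (\<lambda>x. - B x)"
    using B pos_op_clinear[OF P]
    by (simp_all add: bounded_clinear_minus psymmetric_def clinear_minus cinner_minus_left
        cinner_minus_right)
  have ne': "prange P (\<lambda>x. - B x) \<noteq> {}" using False by (auto simp: prange_def)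
  have "Sup (prange P B) \<le> specrad B"
    using norm_le_specrad[OF B(1) Sup_prange_in_spectrum[OF P B False]] by simp
  then have "Re (cinner (P (B x)) x) \<le> specrad B * qform P x"
    using form_le_Sup_prange[OF P B False, of x] qform_nonneg[OF P, of x]
    by (meson mult_right_mono order_trans)
  moreover have "Sup (prange P (\<lambda>x. - B x)) \<le> specrad B"
    using norm_le_specrad[OF B(1) spectrum_op_uminus[OF B(1) Sup_prange_in_spectrum[OF P B' ne']]]
    by simp
  then have "- Re (cinner (P (B x)) x) \<le> specrad B * qform P x"
    using form_le_Sup_prange[OF P B' ne', of x] qform_nonneg[OF P, of x] pos_op_clinear[OF P]
    by (simp add: clinear_minus cinner_minus_left) (meson mult_right_mono order_trans)
  ultimately show ?thesis by (subst psymmetric_cinner_real[OF B(2)]) simp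
qed

lemma psymmetric_cinner_le_specrad:
  assumes P: "pos_op P" and B: "bounded_clinear B" "psymmetric P B"
  shows "cmod (cinner (P (B u)) v) \<le> specrad B * sqrt (qform P u * qform P v)"
proof (rule hermitian_form_bound)
  show "clinear (\<lambda>x. P (B x))"
    by (rule clinear_compose[OF pos_op_clinear[OF P] bounded_clinear_clinear[OF B(1)]])
  show "\<bar>qform (\<lambda>x. P (B x)) w\<bar> \<le> specrad B * qform P w" for w
    using psymmetric_form_le_specrad[OF P B, of w] abs_Re_le_cmod order_trans
    unfolding qform_def by blast
qed (use psymmetric_selfadj[OF B(2)] pos_op_clinear[OF P] qform_nonneg[OF P] specrad_nonneg[OF
    B(1)] in auto)


section \<open>Numerical radius\<close>

lemma numrad_set_bdd_above:
  assumes T: "bounded_clinear T"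
  shows "bdd_above (insert 0 {cmod (cinner (T x) x) | x. norm x = 1})"
proof (rule bdd_aboveI[of _ "onorm T"])
  fix w assume "w \<in> insert 0 {cmod (cinner (T x) x) | x. norm x = 1}"
  moreover have "cmod (cinner (T x) x) \<le> onorm T" if "norm x = 1" for x
    using that cauchy_schwarz[of "T x" x] bounded_clinear_onorm[OF T, of x] by simp
  ultimately show "w \<le> onorm T" using bounded_clinear_onorm_nonneg[OF T] by auto
qed

lemma cmod_cinner_le_numrad: "bounded_clinear T \<Longrightarrow> norm x = 1 \<Longrightarrow> cmod (cinner (T x) x) \<le> numrad T"
  unfolding numrad_def by (rule cSup_upper[OF _ numrad_set_bdd_above]) auto

lemma numrad_nonneg: "bounded_clinear T \<Longrightarrow> 0 \<le> numrad T"
  unfolding numrad_def by (rule cSup_upper[OF _ numrad_set_bdd_above]) auto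

lemma numrad_le_mult:
  assumes S: "bounded_clinear S" and "0 \<le> c"
    and le: "\<And>x. norm x = 1 \<Longrightarrow> cmod (cinner (T x) x) \<le> c * cmod (cinner (S x) x)"
  shows "numrad T \<le> c * numrad S"
  unfolding numrad_def[of T]
proof (rule cSup_least)
  fix w assume "w \<in> insert 0 {cmod (cinner (T x) x) | x. norm x = 1}"
  then show "w \<le> c * numrad S"
  proof
    assume "w = 0"
    then show ?thesis using numrad_nonneg[OF S] \<open>0 \<le> c\<close> by simp
  next
    assume "w \<in> {cmod (cinner (T x) x) | x. norm x = 1}"
    then obtain x where "w = cmod (cinner (T x) x)" "norm x = 1" by blast
    then show ?thesis
      using le[of x] mult_left_mono[OF cmod_cinner_le_numrad[OF S \<open>norm x = 1\<close>] \<open>0 \<le> c\<close>] by simp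
  qed
qed simp

lemma abs_op_psymmetric:
  assumes A: "bounded_clinear A" and B: "bounded_clinear B"
    and comm: "abs_op A \<circ> B = adj B \<circ> abs_op A"
  shows "psymmetric (abs_op A) B"
  unfolding psymmetric_def
proof (intro allI)
  fix u v
  have "cinner (abs_op A (B u)) v = cinner (adj B (abs_op A u)) v" using comm by (metis comp_apply)
  also have "\<dots> = cinner (abs_op A u) (B v)" by (rule adj_cinner_left[OF B])
  also have "\<dots> = cinner u (abs_op A (B v))"
    using pos_op_selfadj[OF abs_op_pos[OF A]] by (simp add: selfadj_def)
  finally show "cinner (abs_op A (B u)) v = cinner u (abs_op A (B v))" .
qed

lemma cinner_AB_abs_adj_le:
  assumes A: "bounded_clinear A" and B: "bounded_clinear B" "psymmetric (abs_op A) B"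
  shows "cmod (cinner (A (B x)) (abs_op (adj A) z))
    \<le> specrad B * sqrt (qform (abs_op A) x * qform (abs_op (adj A)) (abs_op (adj A) z))"
proof -
  let ?Q = "abs_op (adj A)"
  have sa: "selfadj ?Q" by (rule pos_op_selfadj[OF abs_op_pos[OF adj_bounded_clinear[OF A]]])
  have "cinner (A (B x)) (?Q z) = cinner (A (abs_op A (B x))) z"
    using sa abs_op_intertwine[OF A] by (simp add: selfadj_def)
  also have "\<dots> = cinner (abs_op A (B x)) (adj A z)" by (rule adj_cinner_right[OF A])
  finally have cinner_eq: "cinner (A (B x)) (?Q z) = cinner (abs_op A (B x)) (adj A z)" .
  have "qform (abs_op A) (adj A z) = Re (cinner (A (abs_op A (adj A z))) z)"
    by (simp add: qform_def adj_cinner_right[OF A])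
  also have "A (abs_op A (adj A z)) = ?Q (A (adj A z))" by (rule abs_op_intertwine[OF A])
  also have "A (adj A z) = ?Q (?Q z)"
    using abs_op_square[OF adj_bounded_clinear[OF A]] by (simp add: adj_adj[OF A])
  also have "Re (cinner (?Q (?Q (?Q z))) z) = qform ?Q (?Q z)"
    using sa by (simp add: qform_def selfadj_def)
  finally show ?thesis
    using psymmetric_cinner_le_specrad[OF abs_op_pos[OF A] B, of x "adj A z"] cinner_eq by simp
qed

lemma cinner_AB_closure_le:
  assumes A: "bounded_clinear A" and B: "bounded_clinear B" "psymmetric (abs_op A) B"
    and m: "m \<in> closure (range (abs_op (adj A)))"
  shows "cmod (cinner (A (B x)) m)
    \<le> specrad B * sqrt (qform (abs_op A) x * qform (abs_op (adj A)) m)"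
proof -
  let ?Q = "abs_op (adj A)"
  obtain zs where zs: "\<And>n. zs n \<in> range ?Q" "zs \<longlonglongrightarrow> m"
    using m unfolding closure_sequential by blast
  have "isCont ?Q y" for y
    using abs_op_pos[OF adj_bounded_clinear[OF A]]
    by (intro linear_continuous_at bounded_clinear_bounded_linear pos_op_bounded_clinear)
  then have "(\<lambda>n. specrad B * sqrt (qform (abs_op A) x * qform ?Q (zs n)))
      \<longlonglongrightarrow> specrad B * sqrt (qform (abs_op A) x * qform ?Q m)"
    unfolding qform_def by (intro tendsto_intros tendsto_cinner zs(2) isCont_tendsto_compose[of _ ?Q])
  moreover have "(\<lambda>n. cmod (cinner (A (B x)) (zs n))) \<longlonglongrightarrow> cmod (cinner (A (B x)) m)"
    by (intro tendsto_intros tendsto_cinner zs(2))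
  moreover have "cmod (cinner (A (B x)) (zs n))
      \<le> specrad B * sqrt (qform (abs_op A) x * qform ?Q (zs n))" for n
    using zs(1)[of n] cinner_AB_abs_adj_le[OF A B] by auto
  ultimately show ?thesis by (intro LIMSEQ_le) auto
qed

text \<open>The orthogonal complement of the range of |A*| is ker |A*| = ker A*, on which both sides
  of the estimate vanish.\<close>

lemma cinner_AB_le:
  assumes A: "bounded_clinear A" and B: "bounded_clinear B" "psymmetric (abs_op A) B"
  shows "cmod (cinner (A (B x)) y)
    \<le> specrad B * sqrt (qform (abs_op A) x * qform (abs_op (adj A)) y)"
proof -
  let ?Q = "abs_op (adj A)"
  have Q: "pos_op ?Q" by (rule abs_op_pos[OF adj_bounded_clinear[OF A]])
  have "csubspace (closure (range ?Q))"
    by (intro csubspace_closure csubspace_range pos_op_clinear Q)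
  then obtain m where m: "m \<in> closure (range ?Q)"
    "\<And>w. w \<in> closure (range ?Q) \<Longrightarrow> cinner (y - m) w = 0"
    using orthogonal_decomposition[of "closure (range ?Q)" y] by blast
  have "cinner (?Q (y - m)) (?Q (y - m)) = cinner (y - m) (?Q (?Q (y - m)))"
    using pos_op_selfadj[OF Q] by (simp add: selfadj_def)
  also have "\<dots> = 0" by (intro m(2) closure_subset[THEN subsetD] rangeI)
  finally have Q0: "?Q (y - m) = 0" by simp
  have "norm (adj A (y - m)) ^ 2 = Re (cinner (?Q (?Q (y - m))) (y - m))"
    by (simp add: abs_op_square[OF adj_bounded_clinear[OF A]] adj_adj[OF A] adj_cinner_right[OF A]
        flip: cinner_self_Re)
  then have "adj A (y - m) = 0" by (simp add: Q0 clinear_zero[OF pos_op_clinear[OF Q]])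
  then have "cinner (A (B x)) (y - m) = 0" by (simp add: adj_cinner_right[OF A])
  then have "cinner (A (B x)) y = cinner (A (B x)) m" by (simp add: cinner_diff_right)
  moreover have "qform ?Q y = qform ?Q m"
  proof -
    have "?Q y = ?Q m" using Q0 clinear_diff[OF pos_op_clinear[OF Q], of y m] by simp
    moreover have "cinner (?Q m) (y - m) = 0"
      using Q0 pos_op_selfadj[OF Q] by (simp add: selfadj_def)
    ultimately show ?thesis by (simp add: qform_def cinner_diff_right)
  qed
  ultimately show ?thesis using cinner_AB_closure_le[OF A B m(1), of x] by simp
qed

lemma cinner_plus_i_selfadj:
  assumes "selfadj P" "selfadj Q"
  shows "cinner (P x + scaleC \<i> (Q x)) x = Complex (qform P x) (qform Q x)"
  using selfadj_cinner_real[OF assms(1)] selfadj_cinner_real[OF assms(2)]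
  by (simp add: cinner_add_left cinner_scaleC_left complex_eq_iff)

lemma sqrt_mult_le_cmod_Complex:
  assumes "0 \<le> a" "0 \<le> b"
  shows "sqrt (a * b) \<le> 1 / sqrt 2 * cmod (Complex a b)"
proof -
  have "a * b \<le> (a ^ 2 + b ^ 2) / 2"
    using sum_squares_ge_zero[of "a - b" 0] by (simp add: power2_eq_square algebra_simps)
  then have "sqrt (a * b) \<le> sqrt ((a ^ 2 + b ^ 2) / 2)" by (rule real_sqrt_le_mono)
  then show ?thesis by (simp add: cmod_def real_sqrt_divide)
qed

theorem mainTheorem7:
  fixes A B :: "'a::complex_hilbert_space \<Rightarrow> 'a"
  assumes "bounded_clinear A" and "bounded_clinear B"
    and "abs_op A \<circ> B = adj B \<circ> abs_op A"
  shows "numrad (A \<circ> B) \<le>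
    1 / sqrt 2 * specrad B * numrad (\<lambda>x. abs_op A x + scaleC \<i> (abs_op (adj A) x))"
proof -
  have P: "pos_op (abs_op A)" and Q: "pos_op (abs_op (adj A))"
    using abs_op_pos adj_bounded_clinear assms(1) by blast+
  have psym: "psymmetric (abs_op A) B" by (rule abs_op_psymmetric[OF assms])
  have "cmod (cinner ((A \<circ> B) x) x)
      \<le> 1 / sqrt 2 * specrad B * cmod (cinner (abs_op A x + scaleC \<i> (abs_op (adj A) x)) x)" for x
  proof -
    have "cmod (cinner ((A \<circ> B) x) x)
        \<le> specrad B * sqrt (qform (abs_op A) x * qform (abs_op (adj A)) x)"
      using cinner_AB_le[OF assms(1,2) psym] by simp
    also have "\<dots>
        \<le> specrad B * (1 / sqrt 2 * cmod (Complex (qform (abs_op A) x) (qform (abs_op (adj A)) x)))"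
      using specrad_nonneg[OF assms(2)] qform_nonneg[OF P] qform_nonneg[OF Q]
      by (intro mult_left_mono sqrt_mult_le_cmod_Complex) auto
    finally show ?thesis
      by (simp add: cinner_plus_i_selfadj pos_op_selfadj[OF P] pos_op_selfadj[OF Q])
  qed
  moreover have "bounded_clinear (\<lambda>x. abs_op A x + scaleC \<i> (abs_op (adj A) x))"
    using P Q by (intro bounded_clinear_add bounded_clinear_scaleC pos_op_bounded_clinear)
  ultimately show ?thesis
    using specrad_nonneg[OF assms(2)] by (intro numrad_le_mult) auto
qed

end
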